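(* Let $\mathcal C$ be a cocomplete category and $I$ a class of morphisms in $\mathcal C$. Then $\Phi(I)\text{-cof}_{\mathrm{reg}}\subseteq \Phi(I\text{-cof}_{\mathrm{reg}})$.
   Context: For a class $I$ of morphisms, $I\text{-cof}_{\mathrm{reg}}$ is the class of all transfinite compositions of base changes (pushouts) of morphisms from $I$. For a class $I$ of morphisms, $\Phi(I)$ is the class of all morphisms $f:A\to B$ in $\mathcal C$ for which there exists a morphism $h:B\to C$ such that $h\in I$ and $h\circ f\in I$. *)

theory Defs
  imports Main
begin

record ('o, 'm) cat =
  obj :: "'o set"
  arr :: "'m set"
  cdom :: "'m \<Rightarrow> 'o"
  ccod :: "'m \<Rightarrow> 'o"
  idt :: "'o \<Rightarrow> 'm"
  cmp :: "'m \<Rightarrow> 'm \<Rightarrow> 'm"   (* cmp C g f = g \<circ> f, defined when ccod f = cdom g *)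

definition hom :: "('o, 'm) cat \<Rightarrow> 'o \<Rightarrow> 'o \<Rightarrow> 'm set" where
  "hom C a b = {f \<in> arr C. cdom C f = a \<and> ccod C f = b}"

definition category :: "('o, 'm) cat \<Rightarrow> bool" where
  "category C \<longleftrightarrow>
     (\<forall>f \<in> arr C. cdom C f \<in> obj C \<and> ccod C f \<in> obj C) \<and>
     (\<forall>a \<in> obj C. idt C a \<in> hom C a a) \<and>
     (\<forall>f \<in> arr C. \<forall>g \<in> arr C. ccod C f = cdom C g \<longrightarrow>
          cmp C g f \<in> hom C (cdom C f) (ccod C g)) \<and>
     (\<forall>f \<in> arr C. \<forall>g \<in> arr C. \<forall>h \<in> arr C. ccod C f = cdom C g \<longrightarrow> ccod C g = cdom C h \<longrightarrow>
          cmp C h (cmp C g f) = cmp C (cmp C h g) f) \<and>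
     (\<forall>f \<in> arr C. cmp C f (idt C (cdom C f)) = f \<and> cmp C (idt C (ccod C f)) f = f)"

definition diagram :: "('x, 'y) cat \<Rightarrow> ('o, 'm) cat \<Rightarrow> ('x \<Rightarrow> 'o) \<Rightarrow> ('y \<Rightarrow> 'm) \<Rightarrow> bool" where
  "diagram J C Do Da \<longleftrightarrow>
     (\<forall>j \<in> obj J. Do j \<in> obj C) \<and>
     (\<forall>u \<in> arr J. Da u \<in> hom C (Do (cdom J u)) (Do (ccod J u))) \<and>
     (\<forall>j \<in> obj J. Da (idt J j) = idt C (Do j)) \<and>
     (\<forall>u \<in> arr J. \<forall>v \<in> arr J. ccod J u = cdom J v \<longrightarrow> Da (cmp J v u) = cmp C (Da v) (Da u))"

definition cocone :: "('x, 'y) cat \<Rightarrow> ('o, 'm) cat \<Rightarrow> ('x \<Rightarrow> 'o) \<Rightarrow> ('y \<Rightarrow> 'm)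
    \<Rightarrow> 'o \<Rightarrow> ('x \<Rightarrow> 'm) \<Rightarrow> bool" where
  "cocone J C Do Da L lam \<longleftrightarrow>
     L \<in> obj C \<and>
     (\<forall>j \<in> obj J. lam j \<in> hom C (Do j) L) \<and>
     (\<forall>u \<in> arr J. cmp C (lam (ccod J u)) (Da u) = lam (cdom J u))"

definition is_colimit :: "('x, 'y) cat \<Rightarrow> ('o, 'm) cat \<Rightarrow> ('x \<Rightarrow> 'o) \<Rightarrow> ('y \<Rightarrow> 'm)
    \<Rightarrow> 'o \<Rightarrow> ('x \<Rightarrow> 'm) \<Rightarrow> bool" where
  "is_colimit J C Do Da L lam \<longleftrightarrow>
     cocone J C Do Da L lam \<and>
     (\<forall>Q mu. cocone J C Do Da Q mu \<longrightarrow>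
        (\<exists>!w. w \<in> hom C L Q \<and> (\<forall>j \<in> obj J. cmp C w (lam j) = mu j)))"

text \<open>C is cocomplete w.r.t. the universe of (small) index categories whose objects and arrows
  live in the type 'x: every such diagram has a colimit.\<close>
definition cocomplete :: "'x itself \<Rightarrow> ('o, 'm) cat \<Rightarrow> bool" where
  "cocomplete _ C \<longleftrightarrow>
     (\<forall>(J :: ('x, 'x) cat) Do Da. category J \<and> diagram J C Do Da \<longrightarrow>
        (\<exists>L lam. is_colimit J C Do Da L lam))"

text \<open>Square  A --f--> B,  A --g--> X,  X --f'--> P,  B --g'--> P  is a pushout;
  f' is then the base change (pushout) of f along g.\<close>
definition is_pushout :: "('o, 'm) cat \<Rightarrow> 'm \<Rightarrow> 'm \<Rightarrow> 'm \<Rightarrow> 'm \<Rightarrow> bool" where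
  "is_pushout C f g f' g' \<longleftrightarrow>
     f \<in> arr C \<and> g \<in> arr C \<and> cdom C f = cdom C g \<and>
     f' \<in> hom C (ccod C g) (ccod C f') \<and> g' \<in> hom C (ccod C f) (ccod C f') \<and>
     cmp C f' g = cmp C g' f \<and>
     (\<forall>u v. u \<in> arr C \<and> v \<in> arr C \<and> cdom C u = ccod C g \<and> cdom C v = ccod C f \<and>
            ccod C u = ccod C v \<and> cmp C u g = cmp C v f \<longrightarrow>
        (\<exists>!w. w \<in> hom C (ccod C f') (ccod C u) \<and> cmp C w f' = u \<and> cmp C w g' = v))"

definition base_changes :: "('o, 'm) cat \<Rightarrow> 'm set \<Rightarrow> 'm set" where
  "base_changes C K = {f'. \<exists>f g g'. f \<in> K \<and> is_pushout C f g f' g'}"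

text \<open>Ordinals are represented by well-orders r (on the index type 'i); (b, c) \<in> r means b \<le> c.
  A sequence is given by objects X b and transition maps T b c : X b \<rightarrow> X c for b \<le> c.\<close>

definition chain_colimit :: "('o, 'm) cat \<Rightarrow> 'i rel \<Rightarrow> 'i set \<Rightarrow> ('i \<Rightarrow> 'o)
    \<Rightarrow> ('i \<Rightarrow> 'i \<Rightarrow> 'm) \<Rightarrow> 'o \<Rightarrow> ('i \<Rightarrow> 'm) \<Rightarrow> bool" where
  "chain_colimit C r S X T L lam \<longleftrightarrow>
     L \<in> obj C \<and>
     (\<forall>b \<in> S. lam b \<in> hom C (X b) L) \<and>
     (\<forall>b \<in> S. \<forall>c \<in> S. (b, c) \<in> r \<longrightarrow> cmp C (lam c) (T b c) = lam b) \<and>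
     (\<forall>Q mu. Q \<in> obj C \<and> (\<forall>b \<in> S. mu b \<in> hom C (X b) Q) \<and>
             (\<forall>b \<in> S. \<forall>c \<in> S. (b, c) \<in> r \<longrightarrow> cmp C (mu c) (T b c) = mu b) \<longrightarrow>
        (\<exists>!w. w \<in> hom C L Q \<and> (\<forall>b \<in> S. cmp C w (lam b) = mu b)))"

definition immediate_succ :: "'i rel \<Rightarrow> 'i \<Rightarrow> 'i \<Rightarrow> bool" where
  "immediate_succ r b c \<longleftrightarrow>
     (b, c) \<in> r \<and> b \<noteq> c \<and> (\<forall>d. (b, d) \<in> r \<and> (d, c) \<in> r \<longrightarrow> d = b \<or> d = c)"

definition limit_point :: "'i rel \<Rightarrow> 'i \<Rightarrow> bool" where
  "limit_point r c \<longleftrightarrow> c \<in> Field r \<and> (\<exists>b. (b, c) \<in> r \<and> b \<noteq> c) \<and> \<not> (\<exists>b. immediate_succ r b c)"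

definition tseq :: "('o, 'm) cat \<Rightarrow> 'm set \<Rightarrow> 'i rel \<Rightarrow> ('i \<Rightarrow> 'o) \<Rightarrow> ('i \<Rightarrow> 'i \<Rightarrow> 'm) \<Rightarrow> bool" where
  "tseq C K r X T \<longleftrightarrow>
     (\<forall>b \<in> Field r. X b \<in> obj C) \<and>
     (\<forall>b c. (b, c) \<in> r \<longrightarrow> T b c \<in> hom C (X b) (X c)) \<and>
     (\<forall>b \<in> Field r. T b b = idt C (X b)) \<and>
     (\<forall>b c d. (b, c) \<in> r \<and> (c, d) \<in> r \<longrightarrow> cmp C (T c d) (T b c) = T b d) \<and>
     (\<forall>b c. immediate_succ r b c \<longrightarrow> T b c \<in> K) \<and>
     (\<forall>c. limit_point r c \<longrightarrow> chain_colimit C r (underS r c) X T (X c) (\<lambda>b. T b c))"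

definition tcomp :: "'i itself \<Rightarrow> ('o, 'm) cat \<Rightarrow> 'm set \<Rightarrow> 'm set" where
  "tcomp _ C K = {h. \<exists>(r :: 'i rel) X T L lam b0.
       Well_order r \<and> b0 \<in> Field r \<and> (\<forall>b \<in> Field r. (b0, b) \<in> r) \<and>
       tseq C K r X T \<and> chain_colimit C r (Field r) X T L lam \<and> h = lam b0}"

definition cof_reg :: "'i itself \<Rightarrow> ('o, 'm) cat \<Rightarrow> 'm set \<Rightarrow> 'm set" where
  "cof_reg ty C I = tcomp ty C (base_changes C I)"

definition Phi :: "('o, 'm) cat \<Rightarrow> 'm set \<Rightarrow> 'm set" where
  "Phi C I = {f \<in> arr C. \<exists>h. h \<in> I \<and> h \<in> arr C \<and> cdom C h = ccod C f \<and> cmp C h f \<in> I}"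

end

theory Submission
  imports Defs
begin

text \<open>Let \<open>lam b0 : X b0 \<rightarrow> L\<close> be a transfinite composition whose successor steps
  \<open>X b \<rightarrow> X c\<close> are base changes of cells \<open>g : A \<rightarrow> B\<close> in \<open>\<Phi>(I)\<close>, witnessed by \<open>k : B \<rightarrow> K\<close> with
  \<open>k, k \<circ> g \<in> I\<close>. Attaching \<open>k \<circ> g\<close> instead of \<open>g\<close> along the same maps yields a second chain \<open>Y\<close>
  with a comparison \<open>p : X \<rightarrow> Y\<close>, \<open>p b0 = id\<close>, whose steps are base changes of maps in \<open>I\<close>. So
  \<open>Y b0 \<rightarrow> colim Y\<close> lies in \<open>cof_reg I\<close> and equals \<open>h \<circ> lam b0\<close> for the induced
  \<open>h : L \<rightarrow> colim Y\<close>. And \<open>h\<close> lies in \<open>cof_reg I\<close> as well: it is the transfinite composition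
  of the chain \<open>W b = L \<squnion>\<^bsub>X b\<^esub> Y b\<close>, which starts at \<open>W b0 = L\<close>, has colimit \<open>colim Y\<close> because
  pushouts commute with colimits, and whose steps are base changes of the maps \<open>k\<close> by pasting of
  pushouts.\<close>

section \<open>Categories\<close>

lemma hom_iff: "f \<in> hom C a b \<longleftrightarrow> f \<in> arr C \<and> cdom C f = a \<and> ccod C f = b"
  unfolding hom_def by simp

locale cat_setting =
  fixes C :: "('o, 'm) cat"
  assumes category_C: "category C"
begin

lemma dom_obj: "f \<in> arr C \<Longrightarrow> cdom C f \<in> obj C"
  and cod_obj: "f \<in> arr C \<Longrightarrow> ccod C f \<in> obj C"
  using category_C unfolding category_def by blast+

lemma id_arr [simp]: "a \<in> obj C \<Longrightarrow> idt C a \<in> arr C"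
  and id_dom [simp]: "a \<in> obj C \<Longrightarrow> cdom C (idt C a) = a"
  and id_cod [simp]: "a \<in> obj C \<Longrightarrow> ccod C (idt C a) = a"
  using category_C unfolding category_def hom_def by blast+

lemma comp_arr [simp]: "f \<in> arr C \<Longrightarrow> g \<in> arr C \<Longrightarrow> ccod C f = cdom C g \<Longrightarrow> cmp C g f \<in> arr C"
  and comp_dom [simp]: "f \<in> arr C \<Longrightarrow> g \<in> arr C \<Longrightarrow> ccod C f = cdom C g \<Longrightarrow> cdom C (cmp C g f) = cdom C f"
  and comp_cod [simp]: "f \<in> arr C \<Longrightarrow> g \<in> arr C \<Longrightarrow> ccod C f = cdom C g \<Longrightarrow> ccod C (cmp C g f) = ccod C g"
  using category_C unfolding category_def hom_def by blast+

lemma comp_assoc: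
  "f \<in> arr C \<Longrightarrow> g \<in> arr C \<Longrightarrow> h \<in> arr C \<Longrightarrow> ccod C f = cdom C g \<Longrightarrow> ccod C g = cdom C h \<Longrightarrow>
   cmp C (cmp C h g) f = cmp C h (cmp C g f)"
  using category_C unfolding category_def by metis

lemma comp_whisker:
  assumes "cmp C h g = e" "f \<in> arr C" "g \<in> arr C" "h \<in> arr C" "ccod C f = cdom C g" "ccod C g = cdom C h"
  shows "cmp C h (cmp C g f) = cmp C e f"
  using assms comp_assoc by metis

lemma comp_whisker3:
  assumes "cmp C h (cmp C g k) = e" "f \<in> arr C" "k \<in> arr C" "g \<in> arr C" "h \<in> arr C"
    "ccod C f = cdom C k" "ccod C k = cdom C g" "ccod C g = cdom C h"
  shows "cmp C h (cmp C g (cmp C k f)) = cmp C e f"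
  using assms comp_assoc comp_arr comp_dom comp_cod by metis

lemma id_right [simp]: "f \<in> arr C \<Longrightarrow> cdom C f = a \<Longrightarrow> cmp C f (idt C a) = f"
  and id_left [simp]: "f \<in> arr C \<Longrightarrow> ccod C f = a \<Longrightarrow> cmp C (idt C a) f = f"
  using category_C unfolding category_def by blast+

end

section \<open>Reindexing index categories\<close>

text \<open>Cocompleteness only speaks about index categories on the type \<open>'x\<close>; an injection
  \<open>e :: 'a \<Rightarrow> 'x\<close> transports index categories on \<open>'a\<close> there.\<close>

definition reindex_cat :: "('a \<Rightarrow> 'x) \<Rightarrow> ('a, 'a) cat \<Rightarrow> ('x, 'x) cat" where
  "reindex_cat e J = \<lparr>obj = e ` obj J, arr = e ` arr J,
      cdom = (\<lambda>x. e (cdom J (inv e x))), ccod = (\<lambda>x. e (ccod J (inv e x))),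
      idt = (\<lambda>x. e (idt J (inv e x))), cmp = (\<lambda>y x. e (cmp J (inv e y) (inv e x)))\<rparr>"

lemma reindex_cat_simps:
  "obj (reindex_cat e J) = e ` obj J" "arr (reindex_cat e J) = e ` arr J"
  "cdom (reindex_cat e J) x = e (cdom J (inv e x))" "ccod (reindex_cat e J) x = e (ccod J (inv e x))"
  "idt (reindex_cat e J) x = e (idt J (inv e x))" "cmp (reindex_cat e J) y x = e (cmp J (inv e y) (inv e x))"
  unfolding reindex_cat_def by simp_all

lemma category_reindex_cat:
  assumes "inj e" "category J"
  shows "category (reindex_cat e J)"
  using assms(2) unfolding category_def hom_def reindex_cat_simps
  by (simp add: inv_f_f[OF assms(1)] inj_eq[OF assms(1)])

lemma diagram_reindex_cat:
  assumes "inj e" "diagram J C Do Da"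
  shows "diagram (reindex_cat e J) C (Do \<circ> inv e) (Da \<circ> inv e)"
  using assms(2) unfolding diagram_def reindex_cat_simps
  by (simp add: inv_f_f[OF assms(1)] inj_eq[OF assms(1)])

lemma cocone_reindex_cat_iff:
  assumes "inj e"
  shows "cocone (reindex_cat e J) C (Do \<circ> inv e) (Da \<circ> inv e) L mu \<longleftrightarrow> cocone J C Do Da L (mu \<circ> e)"
  unfolding cocone_def reindex_cat_simps by (simp add: inv_f_f[OF assms(1)] inj_eq[OF assms(1)])

lemma is_colimit_reindex_cat:
  assumes e: "inj e" and colim: "is_colimit (reindex_cat e J) C (Do \<circ> inv e) (Da \<circ> inv e) L lam"
  shows "is_colimit J C Do Da L (lam \<circ> e)"
  unfolding is_colimit_def
proof (intro conjI allI impI)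
  show "cocone J C Do Da L (lam \<circ> e)"
    using colim unfolding is_colimit_def cocone_reindex_cat_iff[OF e] by blast
  fix Q mu
  assume "cocone J C Do Da Q mu"
  then have "cocone (reindex_cat e J) C (Do \<circ> inv e) (Da \<circ> inv e) Q (mu \<circ> inv e)"
    by (simp add: cocone_reindex_cat_iff[OF e] o_assoc[symmetric] inv_o_cancel[OF e])
  then have "\<exists>!w. w \<in> hom C L Q \<and> (\<forall>j\<in>obj (reindex_cat e J). cmp C w (lam j) = (mu \<circ> inv e) j)"
    using colim unfolding is_colimit_def by blast
  then show "\<exists>!w. w \<in> hom C L Q \<and> (\<forall>j\<in>obj J. cmp C w ((lam \<circ> e) j) = mu j)"
    unfolding reindex_cat_simps by (simp add: inv_f_f[OF e])
qed

lemma cocomplete_has_colimit: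
  assumes "cocomplete TYPE('x) C" "inj (e :: 'a \<Rightarrow> 'x)" "category (J :: ('a, 'a) cat)" "diagram J C Do Da"
  obtains L lam where "is_colimit J C Do Da L lam"
proof -
  obtain L lam where "is_colimit (reindex_cat e J) C (Do \<circ> inv e) (Da \<circ> inv e) L lam"
    using assms(1) category_reindex_cat[OF assms(2,3)] diagram_reindex_cat[OF assms(2,4)]
    unfolding cocomplete_def by blast
  then show ?thesis by (rule that[OF is_colimit_reindex_cat[OF assms(2)]])
qed

section \<open>Pushouts\<close>

definition copair :: "('o, 'm) cat \<Rightarrow> 'm \<Rightarrow> 'm \<Rightarrow> 'm \<Rightarrow> 'm \<Rightarrow> 'm" where
  "copair C f' g' u v = (THE w. w \<in> hom C (ccod C f') (ccod C u) \<and> cmp C w f' = u \<and> cmp C w g' = v)"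

definition some_pushout :: "('o, 'm) cat \<Rightarrow> 'm \<Rightarrow> 'm \<Rightarrow> 'm \<times> 'm" where
  "some_pushout C f g = (SOME (f', g'). is_pushout C f g f' g')"

context cat_setting
begin

lemma pushoutD:
  assumes "is_pushout C f g f' g'"
  shows "f \<in> arr C" "g \<in> arr C" "cdom C f = cdom C g" "f' \<in> arr C" "g' \<in> arr C"
    "cdom C f' = ccod C g" "cdom C g' = ccod C f" "ccod C g' = ccod C f'" "cmp C f' g = cmp C g' f"
  using assms unfolding is_pushout_def hom_def by auto

lemma copair:
  assumes po: "is_pushout C f g f' g'"
    and uv: "u \<in> arr C" "v \<in> arr C" "cdom C u = ccod C g" "cdom C v = ccod C f"
      "ccod C u = ccod C v" "cmp C u g = cmp C v f"
  shows "copair C f' g' u v \<in> arr C" "cdom C (copair C f' g' u v) = ccod C f'"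
    "ccod C (copair C f' g' u v) = ccod C u"
    "cmp C (copair C f' g' u v) f' = u" "cmp C (copair C f' g' u v) g' = v"
proof -
  have "\<exists>!w. w \<in> hom C (ccod C f') (ccod C u) \<and> cmp C w f' = u \<and> cmp C w g' = v"
    using po uv unfolding is_pushout_def by blast
  then have "copair C f' g' u v \<in> hom C (ccod C f') (ccod C u) \<and>
      cmp C (copair C f' g' u v) f' = u \<and> cmp C (copair C f' g' u v) g' = v"
    unfolding copair_def by (rule theI')
  then show "copair C f' g' u v \<in> arr C" "cdom C (copair C f' g' u v) = ccod C f'"
    "ccod C (copair C f' g' u v) = ccod C u"
    "cmp C (copair C f' g' u v) f' = u" "cmp C (copair C f' g' u v) g' = v"
    unfolding hom_iff by simp_all
qed

lemma pushout_uniq: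
  assumes po: "is_pushout C f g f' g'"
    and w1: "w1 \<in> arr C" "cdom C w1 = ccod C f'" and w2: "w2 \<in> arr C" "cdom C w2 = ccod C f'"
    and cod: "ccod C w1 = ccod C w2"
    and legs: "cmp C w1 f' = cmp C w2 f'" "cmp C w1 g' = cmp C w2 g'"
  shows "w1 = w2"
proof -
  note D = pushoutD[OF po]
  let ?u = "cmp C w1 f'" and ?v = "cmp C w1 g'"
  have "?u \<in> arr C" "?v \<in> arr C" "cdom C ?u = ccod C g" "cdom C ?v = ccod C f" "ccod C ?u = ccod C ?v"
    using D w1 by simp_all
  moreover have "cmp C ?u g = cmp C ?v f"
    using D w1 by (simp add: comp_assoc)
  ultimately have "\<exists>!w. w \<in> hom C (ccod C f') (ccod C ?u) \<and> cmp C w f' = ?u \<and> cmp C w g' = ?v"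
    using po unfolding is_pushout_def by blast
  moreover have "w1 \<in> hom C (ccod C f') (ccod C ?u)" "w2 \<in> hom C (ccod C f') (ccod C ?u)"
    using w1 w2 cod D unfolding hom_iff by simp_all
  ultimately show ?thesis using legs by metis
qed

lemma pushout_along_id:
  assumes f: "f \<in> arr C"
  shows "is_pushout C f (idt C (cdom C f)) f (idt C (ccod C f))"
    and "is_pushout C (idt C (cdom C f)) f (idt C (ccod C f)) f"
proof -
  have o: "cdom C f \<in> obj C" "ccod C f \<in> obj C" using f dom_obj cod_obj by auto
  show "is_pushout C f (idt C (cdom C f)) f (idt C (ccod C f))"
    unfolding is_pushout_def hom_iff
  proof (intro conjI allI impI)
    fix u v assume "u \<in> arr C \<and> v \<in> arr C \<and> cdom C u = ccod C (idt C (cdom C f)) \<and>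
       cdom C v = ccod C f \<and> ccod C u = ccod C v \<and> cmp C u (idt C (cdom C f)) = cmp C v f"
    then show "\<exists>!w. (w \<in> arr C \<and> cdom C w = ccod C f \<and> ccod C w = ccod C u) \<and>
             cmp C w f = u \<and> cmp C w (idt C (ccod C f)) = v"
      using o by (intro ex1I[of _ v]) auto
  qed (use f o in simp_all)
  show "is_pushout C (idt C (cdom C f)) f (idt C (ccod C f)) f"
    unfolding is_pushout_def hom_iff
  proof (intro conjI allI impI)
    fix u v assume "u \<in> arr C \<and> v \<in> arr C \<and> cdom C u = ccod C f \<and>
       cdom C v = ccod C (idt C (cdom C f)) \<and> ccod C u = ccod C v \<and> cmp C u f = cmp C v (idt C (cdom C f))"
    then show "\<exists>!w. (w \<in> arr C \<and> cdom C w = ccod C (idt C (ccod C f)) \<and> ccod C w = ccod C u) \<and>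
             cmp C w (idt C (ccod C f)) = u \<and> cmp C w f = v"
      using o by (intro ex1I[of _ u]) auto
  qed (use f o in simp_all)
qed

end

text \<open>The index category of a span \<open>1 \<leftarrow> 0 \<rightarrow> 2\<close>: arrows \<open>0, 1, 2\<close> are the identities,
  \<open>3 : 0 \<rightarrow> 1\<close> and \<open>4 : 0 \<rightarrow> 2\<close>.\<close>
definition span_cat :: "(nat, nat) cat" where
  "span_cat = \<lparr>obj = {0, 1, 2}, arr = {0, 1, 2, 3, 4},
     cdom = (\<lambda>u. if u = 3 \<or> u = 4 then 0 else u),
     ccod = (\<lambda>u. if u = 3 then 1 else if u = 4 then 2 else u),
     idt = (\<lambda>u. u), cmp = (\<lambda>v u. if u \<le> 2 then v else u)\<rparr>"

lemma span_cat_simps: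
  "obj span_cat = {0, 1, 2}" "arr span_cat = {0, 1, 2, 3, 4}"
  "cdom span_cat u = (if u = 3 \<or> u = 4 then 0 else u)"
  "ccod span_cat u = (if u = 3 then 1 else if u = 4 then 2 else u)"
  "idt span_cat u = u" "cmp span_cat v u = (if u \<le> 2 then v else u)"
  unfolding span_cat_def by simp_all

lemma category_span_cat: "category span_cat"
  unfolding category_def hom_def span_cat_simps by simp

definition span_obj :: "('o, 'm) cat \<Rightarrow> 'm \<Rightarrow> 'm \<Rightarrow> nat \<Rightarrow> 'o" where
  "span_obj C f g j = (if j = 0 then cdom C f else if j = 1 then ccod C f else ccod C g)"

definition span_arr :: "('o, 'm) cat \<Rightarrow> 'm \<Rightarrow> 'm \<Rightarrow> nat \<Rightarrow> 'm" where
  "span_arr C f g u = (if u = 3 then f else if u = 4 then g else idt C (span_obj C f g u))"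

context cat_setting
begin

context
  fixes f g
  assumes f: "f \<in> arr C" and g: "g \<in> arr C" and fg: "cdom C f = cdom C g"
begin

private lemma span_objs: "cdom C f \<in> obj C" "ccod C f \<in> obj C" "ccod C g \<in> obj C"
  using f g dom_obj cod_obj by auto

lemma diagram_span: "diagram span_cat C (span_obj C f g) (span_arr C f g)"
  unfolding diagram_def span_cat_simps hom_def using span_objs f g fg
  by (simp add: span_obj_def span_arr_def)

lemma cocone_span_iff:
  "cocone span_cat C (span_obj C f g) (span_arr C f g) Q mu \<longleftrightarrow>
     Q \<in> obj C \<and> mu 1 \<in> hom C (ccod C f) Q \<and> mu 2 \<in> hom C (ccod C g) Q \<and>
     mu 0 = cmp C (mu 1) f \<and> mu 0 = cmp C (mu 2) g"
  unfolding cocone_def span_cat_simps hom_iff using span_objs f g fg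
  by (auto simp: span_obj_def span_arr_def)

lemma is_pushout_span_colimit:
  assumes colim: "is_colimit span_cat C (span_obj C f g) (span_arr C f g) L lam"
  shows "is_pushout C f g (lam 2) (lam 1)"
proof -
  have cocone: "L \<in> obj C" "lam 1 \<in> hom C (ccod C f) L" "lam 2 \<in> hom C (ccod C g) L"
      "lam 0 = cmp C (lam 1) f" "lam 0 = cmp C (lam 2) g"
    using colim unfolding is_colimit_def cocone_span_iff by blast+
  then have L: "ccod C (lam 2) = L" by (simp add: hom_iff)
  have "\<exists>!w. w \<in> hom C (ccod C (lam 2)) (ccod C u) \<and> cmp C w (lam 2) = u \<and> cmp C w (lam 1) = v"
    if uv: "u \<in> arr C" "v \<in> arr C" "cdom C u = ccod C g" "cdom C v = ccod C f"
      "ccod C u = ccod C v" "cmp C u g = cmp C v f" for u v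
  proof -
    define mu where "mu j = (if j = 0 then cmp C u g else if j = 1 then v else u)" for j :: nat
    have "cocone span_cat C (span_obj C f g) (span_arr C f g) (ccod C u) mu"
      unfolding cocone_span_iff hom_iff using uv cod_obj by (simp add: mu_def)
    then have "\<exists>!w. w \<in> hom C L (ccod C u) \<and> (\<forall>j\<in>{0, 1, 2}. cmp C w (lam j) = mu j)"
      using colim unfolding is_colimit_def span_cat_simps by blast
    moreover have "(\<forall>j\<in>{0, 1, 2}. cmp C w (lam j) = mu j) \<longleftrightarrow> cmp C w (lam 2) = u \<and> cmp C w (lam 1) = v"
      if "w \<in> hom C L (ccod C u)" for w
    proof -
      have "cmp C w (lam 0) = cmp C (cmp C w (lam 2)) g"
        using that cocone g by (auto simp: hom_iff comp_assoc)
      then show ?thesis unfolding mu_def by auto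
    qed
    ultimately show ?thesis using L by metis
  qed
  then show ?thesis
    unfolding is_pushout_def using f g fg cocone L by (auto simp: hom_iff)
qed

end

end

locale cocomplete_cat = cat_setting C for C :: "('o, 'm) cat" +
  fixes index_type :: "'x itself"
  assumes cocomplete: "cocomplete TYPE('x) C" and infinite_index: "infinite (UNIV :: 'x set)"
begin

lemma pushout_exists:
  assumes "f \<in> arr C" "g \<in> arr C" "cdom C f = cdom C g"
  obtains f' g' where "is_pushout C f g f' g'"
proof -
  obtain e :: "nat \<Rightarrow> 'x" where "inj e"
    using infinite_index infinite_countable_subset by blast
  then obtain L lam where "is_colimit span_cat C (span_obj C f g) (span_arr C f g) L lam"
    using cocomplete_has_colimit[OF cocomplete _ category_span_cat diagram_span[OF assms]] by blast
  then show ?thesis using is_pushout_span_colimit[OF assms] that by blast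
qed

lemma some_pushout:
  assumes "f \<in> arr C" "g \<in> arr C" "cdom C f = cdom C g"
  shows "is_pushout C f g (fst (some_pushout C f g)) (snd (some_pushout C f g))"
proof -
  obtain f' g' where "is_pushout C f g f' g'" using pushout_exists[OF assms] .
  then have "\<exists>x. (\<lambda>(f', g'). is_pushout C f g f' g') x" by auto
  then have "(\<lambda>(f', g'). is_pushout C f g f' g') (some_pushout C f g)"
    unfolding some_pushout_def by (rule someI_ex)
  then show ?thesis by (simp split: prod.splits)
qed

end

context cat_setting
begin

text \<open>Pasting of pushouts in a cube: if \<open>X' = X \<squnion>\<^sub>A B\<close> and \<open>Y' = Y \<squnion>\<^sub>A K\<close> (along \<open>k \<circ> g\<close>),
  then \<open>L \<squnion>\<^bsub>X'\<^esub> Y' = (L \<squnion>\<^sub>X Y) \<squnion>\<^sub>B K\<close>, i.e. the comparison map \<open>tw : W \<rightarrow> W'\<close> is a base change of \<open>k\<close>.\<close>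

context
  fixes g u t g' k v z p p' l lW qW lW' qW' tw and A B X X' K Y Y' L W W'
  assumes X'_po: "is_pushout C g u t g'"
    and Y'_po: "is_pushout C (cmp C k g) (cmp C p u) v z"
    and p'_legs: "cmp C p' t = cmp C v p" "cmp C p' g' = cmp C z k"
    and W_po: "is_pushout C p (cmp C l t) lW qW"
    and W'_po: "is_pushout C p' l lW' qW'"
    and tw_legs: "cmp C tw lW = lW'" "cmp C tw qW = cmp C qW' v"
    and typing: "g \<in> hom C A B" "u \<in> hom C A X" "t \<in> hom C X X'" "g' \<in> hom C B X'" "k \<in> hom C B K"
      "v \<in> hom C Y Y'" "z \<in> hom C K Y'" "p \<in> hom C X Y" "p' \<in> hom C X' Y'"
      "l \<in> hom C X' L" "lW \<in> hom C L W" "qW \<in> hom C Y W" "lW' \<in> hom C L W'"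
      "qW' \<in> hom C Y' W'" "tw \<in> hom C W W'"
begin

private lemma arrs:
  "g \<in> arr C" "cdom C g = A" "ccod C g = B" "u \<in> arr C" "cdom C u = A" "ccod C u = X"
  "t \<in> arr C" "cdom C t = X" "ccod C t = X'" "g' \<in> arr C" "cdom C g' = B" "ccod C g' = X'"
  "k \<in> arr C" "cdom C k = B" "ccod C k = K" "v \<in> arr C" "cdom C v = Y" "ccod C v = Y'"
  "z \<in> arr C" "cdom C z = K" "ccod C z = Y'" "p \<in> arr C" "cdom C p = X" "ccod C p = Y"
  "p' \<in> arr C" "cdom C p' = X'" "ccod C p' = Y'" "l \<in> arr C" "cdom C l = X'" "ccod C l = L"
  "lW \<in> arr C" "cdom C lW = L" "ccod C lW = W" "qW \<in> arr C" "cdom C qW = Y" "ccod C qW = W"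
  "lW' \<in> arr C" "cdom C lW' = L" "ccod C lW' = W'" "qW' \<in> arr C" "cdom C qW' = Y'" "ccod C qW' = W'"
  "tw \<in> arr C" "cdom C tw = W" "ccod C tw = W'"
  using typing by (auto simp: hom_iff)

private lemmas squares = pushoutD(9)[OF X'_po] pushoutD(9)[OF Y'_po] pushoutD(9)[OF W_po]
  pushoutD(9)[OF W'_po]

private lemma square: "cmp C tw (cmp C lW (cmp C l g')) = cmp C (cmp C qW' z) k"
  using arrs
  by (simp add: comp_assoc comp_whisker[OF tw_legs(1)] comp_whisker[OF squares(4)] p'_legs(2))

private lemma factorization:
  assumes UV: "U \<in> arr C" "V \<in> arr C" "cdom C U = W" "cdom C V = K" "ccod C U = ccod C V"
    "cmp C U (cmp C lW (cmp C l g')) = cmp C V k"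
  obtains w where "w \<in> arr C" "cdom C w = W'" "ccod C w = ccod C U"
    "cmp C w tw = U" "cmp C w (cmp C qW' z) = V"
proof -
  have Y'_cocone: "cmp C (cmp C U qW) (cmp C p u) = cmp C V (cmp C k g)"
    using UV(1-5) arrs by (simp add: comp_assoc comp_whisker[OF squares(3)[symmetric]] squares(1)
        comp_whisker[OF UV(6)[symmetric]])
  define y where "y = copair C v z (cmp C U qW) V"
  have y: "y \<in> arr C" "cdom C y = Y'" "ccod C y = ccod C U" "cmp C y v = cmp C U qW" "cmp C y z = V"
    unfolding y_def using copair[OF Y'_po _ UV(2) _ _ _ Y'_cocone] UV arrs by simp_all
  have W'_cocone: "cmp C (cmp C U lW) l = cmp C y p'"
  proof (rule pushout_uniq[OF X'_po])
    show "cmp C (cmp C (cmp C U lW) l) t = cmp C (cmp C y p') t"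
      using UV y arrs by (simp add: comp_assoc squares(3) p'_legs(1) comp_whisker[OF y(4)])
    show "cmp C (cmp C (cmp C U lW) l) g' = cmp C (cmp C y p') g'"
      using UV y arrs by (simp add: comp_assoc p'_legs(2) comp_whisker[OF y(5)])
  qed (use UV y arrs in simp_all)
  define w where "w = copair C lW' qW' (cmp C U lW) y"
  have w: "w \<in> arr C" "cdom C w = W'" "ccod C w = ccod C U" "cmp C w lW' = cmp C U lW" "cmp C w qW' = y"
    unfolding w_def using copair[OF W'_po _ y(1) _ _ _ W'_cocone] UV y arrs by simp_all
  have "cmp C w tw = U"
  proof (rule pushout_uniq[OF W_po])
    show "cmp C (cmp C w tw) lW = cmp C U lW"
      using w arrs by (simp add: comp_assoc tw_legs(1))
    show "cmp C (cmp C w tw) qW = cmp C U qW"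
      using w y arrs by (simp add: comp_assoc tw_legs(2) comp_whisker[OF w(5)])
  qed (use w UV arrs in simp_all)
  moreover have "cmp C w (cmp C qW' z) = V"
    using w y arrs by (simp add: comp_whisker[OF w(5)])
  ultimately show ?thesis using that w by blast
qed

private lemma uniqueness:
  assumes w1: "w1 \<in> arr C" "cdom C w1 = W'" and w2: "w2 \<in> arr C" "cdom C w2 = W'"
    and cod: "ccod C w1 = ccod C w2"
    and eqs: "cmp C w1 tw = cmp C w2 tw" "cmp C w1 (cmp C qW' z) = cmp C w2 (cmp C qW' z)"
  shows "w1 = w2"
proof (rule pushout_uniq[OF W'_po])
  show "cmp C w1 lW' = cmp C w2 lW'"
    using w1 w2 arrs by (simp add: comp_assoc comp_whisker[OF eqs(1)] flip: tw_legs(1))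
  show "cmp C w1 qW' = cmp C w2 qW'"
  proof (rule pushout_uniq[OF Y'_po])
    show "cmp C (cmp C w1 qW') v = cmp C (cmp C w2 qW') v"
      using w1 w2 arrs by (simp add: comp_assoc comp_whisker[OF eqs(1)] flip: tw_legs(2))
    show "cmp C (cmp C w1 qW') z = cmp C (cmp C w2 qW') z"
      using eqs(2) w1 w2 arrs by (simp add: comp_assoc)
  qed (use w1 w2 cod arrs in simp_all)
qed (use w1 w2 cod arrs in simp_all)

lemma cell_extension_pushout: "is_pushout C k (cmp C lW (cmp C l g')) tw (cmp C qW' z)"
  unfolding is_pushout_def hom_iff
proof (intro conjI allI impI)
  fix U V
  assume "U \<in> arr C \<and> V \<in> arr C \<and> cdom C U = ccod C (cmp C lW (cmp C l g')) \<and> cdom C V = ccod C k \<and>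
     ccod C U = ccod C V \<and> cmp C U (cmp C lW (cmp C l g')) = cmp C V k"
  then have UV: "U \<in> arr C" "V \<in> arr C" "cdom C U = W" "cdom C V = K" "ccod C U = ccod C V"
    "cmp C U (cmp C lW (cmp C l g')) = cmp C V k" using arrs by auto
  obtain w where w: "w \<in> arr C" "cdom C w = W'" "ccod C w = ccod C U"
    "cmp C w tw = U" "cmp C w (cmp C qW' z) = V"
    using factorization[OF UV] .
  show "\<exists>!w. (w \<in> arr C \<and> cdom C w = ccod C tw \<and> ccod C w = ccod C U) \<and>
      cmp C w tw = U \<and> cmp C w (cmp C qW' z) = V"
  proof (rule ex1I[of _ w])
    fix w' assume "(w' \<in> arr C \<and> cdom C w' = ccod C tw \<and> ccod C w' = ccod C U) \<and>
      cmp C w' tw = U \<and> cmp C w' (cmp C qW' z) = V"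
    then show "w' = w" using uniqueness[of w' w] w arrs by simp
  qed (use w arrs in simp)
qed (use square arrs in simp_all)

end

end

section \<open>Colimits of chains\<close>

text \<open>A chain over \<open>S\<close> as an index category: objects \<open>(b, b)\<close>, arrows \<open>(b, c)\<close> for \<open>(b, c) \<in> r\<close>.\<close>
definition chain_cat :: "'i rel \<Rightarrow> 'i set \<Rightarrow> ('i \<times> 'i, 'i \<times> 'i) cat" where
  "chain_cat r S = \<lparr>obj = {(b, b) | b. b \<in> S}, arr = {(b, c) | b c. (b, c) \<in> r \<and> b \<in> S \<and> c \<in> S},
     cdom = (\<lambda>(b, c). (b, b)), ccod = (\<lambda>(b, c). (c, c)), idt = (\<lambda>u. u),
     cmp = (\<lambda>(c', d) (b, c). (b, d))\<rparr>"

lemma chain_cat_simps: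
  "obj (chain_cat r S) = {(b, b) | b. b \<in> S}"
  "arr (chain_cat r S) = {(b, c) | b c. (b, c) \<in> r \<and> b \<in> S \<and> c \<in> S}"
  "cdom (chain_cat r S) (b, c) = (b, b)" "ccod (chain_cat r S) (b, c) = (c, c)" "idt (chain_cat r S) u = u"
  "cmp (chain_cat r S) (c', d) (b, c) = (b, d)"
  unfolding chain_cat_def by simp_all

lemma category_chain_cat:
  assumes "\<forall>b\<in>S. (b, b) \<in> r" "trans r"
  shows "category (chain_cat r S)"
  using assms unfolding category_def hom_def chain_cat_simps trans_def by (auto simp: chain_cat_simps)

lemma chain_colimit_cong:
  assumes "\<forall>a\<in>S. X a = X' a" "\<forall>a\<in>S. \<forall>a'\<in>S. T a a' = T' a a'" "\<forall>a\<in>S. lam a = lam' a"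
  shows "chain_colimit C r S X T L lam = chain_colimit C r S X' T' L lam'"
  unfolding chain_colimit_def using assms by (simp cong: ball_cong)

lemma chain_colimit_of_is_colimit:
  assumes colim: "is_colimit (chain_cat r S) C (\<lambda>bb. X (fst bb)) (\<lambda>bc. T (fst bc) (snd bc)) L lam"
  shows "chain_colimit C r S X T L (\<lambda>b. lam (b, b))"
  unfolding chain_colimit_def
proof (intro conjI ballI allI impI)
  have cocone: "cocone (chain_cat r S) C (\<lambda>bb. X (fst bb)) (\<lambda>bc. T (fst bc) (snd bc)) L lam"
    using colim unfolding is_colimit_def by blast
  then show "L \<in> obj C" unfolding cocone_def by simp
  fix b assume b: "b \<in> S"
  then show "lam (b, b) \<in> hom C (X b) L"
    using cocone unfolding cocone_def chain_cat_simps by auto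
  fix c assume "c \<in> S" "(b, c) \<in> r"
  then show "cmp C (lam (c, c)) (T b c) = lam (b, b)"
    using b cocone unfolding cocone_def chain_cat_simps by (auto simp: chain_cat_simps)
next
  fix Q mu
  assume "Q \<in> obj C \<and> (\<forall>b\<in>S. mu b \<in> hom C (X b) Q) \<and>
    (\<forall>b\<in>S. \<forall>c\<in>S. (b, c) \<in> r \<longrightarrow> cmp C (mu c) (T b c) = mu b)"
  then have "cocone (chain_cat r S) C (\<lambda>bb. X (fst bb)) (\<lambda>bc. T (fst bc) (snd bc)) Q (\<lambda>(b, c). mu b)"
    unfolding cocone_def chain_cat_simps by (auto simp: chain_cat_simps)
  then have "\<exists>!w. w \<in> hom C L Q \<and> (\<forall>j\<in>obj (chain_cat r S). cmp C w (lam j) = (\<lambda>(b, c). mu b) j)"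
    using colim unfolding is_colimit_def by blast
  moreover have "(\<forall>j\<in>obj (chain_cat r S). cmp C w (lam j) = (\<lambda>(b, c). mu b) j) \<longleftrightarrow>
      (\<forall>b\<in>S. cmp C w (lam (b, b)) = mu b)" for w
    unfolding chain_cat_simps by auto
  ultimately show "\<exists>!w. w \<in> hom C L Q \<and> (\<forall>b\<in>S. cmp C w (lam (b, b)) = mu b)"
    by simp
qed

definition some_chain_colimit :: "('o, 'm) cat \<Rightarrow> 'i rel \<Rightarrow> 'i set \<Rightarrow> ('i \<Rightarrow> 'o) \<Rightarrow> ('i \<Rightarrow> 'i \<Rightarrow> 'm)
    \<Rightarrow> 'o \<times> ('i \<Rightarrow> 'm)" where
  "some_chain_colimit C r S X T = (SOME (L, lam). chain_colimit C r S X T L lam)"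

definition colim_map :: "('o, 'm) cat \<Rightarrow> 'i set \<Rightarrow> 'o \<Rightarrow> ('i \<Rightarrow> 'm) \<Rightarrow> 'o \<Rightarrow> ('i \<Rightarrow> 'm) \<Rightarrow> 'm" where
  "colim_map C S L lam Q mu = (THE w. w \<in> hom C L Q \<and> (\<forall>b\<in>S. cmp C w (lam b) = mu b))"

lemma colim_map_cong:
  "\<forall>a\<in>S. mu a = mu' a \<Longrightarrow> colim_map C S L lam Q mu = colim_map C S L lam Q mu'"
  unfolding colim_map_def by (auto cong: ball_cong)

context cat_setting
begin

lemma chain_colimitD:
  assumes "chain_colimit C r S X T L lam"
  shows "L \<in> obj C" "\<And>b. b \<in> S \<Longrightarrow> lam b \<in> arr C" "\<And>b. b \<in> S \<Longrightarrow> cdom C (lam b) = X b"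
    "\<And>b. b \<in> S \<Longrightarrow> ccod C (lam b) = L"
    "\<And>b c. b \<in> S \<Longrightarrow> c \<in> S \<Longrightarrow> (b, c) \<in> r \<Longrightarrow> cmp C (lam c) (T b c) = lam b"
  using assms unfolding chain_colimit_def hom_iff by auto

lemma colim_map:
  assumes colim: "chain_colimit C r S X T L lam"
    and mu: "Q \<in> obj C" "\<forall>b\<in>S. mu b \<in> hom C (X b) Q"
      "\<forall>b\<in>S. \<forall>c\<in>S. (b, c) \<in> r \<longrightarrow> cmp C (mu c) (T b c) = mu b"
  shows "colim_map C S L lam Q mu \<in> arr C" "cdom C (colim_map C S L lam Q mu) = L"
    "ccod C (colim_map C S L lam Q mu) = Q" "\<And>b. b \<in> S \<Longrightarrow> cmp C (colim_map C S L lam Q mu) (lam b) = mu b"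
proof -
  have "\<exists>!w. w \<in> hom C L Q \<and> (\<forall>b\<in>S. cmp C w (lam b) = mu b)"
    using colim mu unfolding chain_colimit_def by blast
  then have "colim_map C S L lam Q mu \<in> hom C L Q \<and> (\<forall>b\<in>S. cmp C (colim_map C S L lam Q mu) (lam b) = mu b)"
    unfolding colim_map_def by (rule theI')
  then show "colim_map C S L lam Q mu \<in> arr C" "cdom C (colim_map C S L lam Q mu) = L"
    "ccod C (colim_map C S L lam Q mu) = Q" "\<And>b. b \<in> S \<Longrightarrow> cmp C (colim_map C S L lam Q mu) (lam b) = mu b"
    unfolding hom_iff by simp_all
qed

lemma chain_colimit_uniq:
  assumes colim: "chain_colimit C r S X T L lam"
    and T: "\<forall>b\<in>S. \<forall>c\<in>S. (b, c) \<in> r \<longrightarrow> T b c \<in> arr C \<and> ccod C (T b c) = X c"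
    and w1: "w1 \<in> arr C" "cdom C w1 = L" and w2: "w2 \<in> arr C" "cdom C w2 = L"
    and cod: "ccod C w1 = ccod C w2"
    and eq: "\<forall>b\<in>S. cmp C w1 (lam b) = cmp C w2 (lam b)"
  shows "w1 = w2"
proof -
  note D = chain_colimitD[OF colim]
  define mu where "mu b = cmp C w1 (lam b)" for b
  have "\<forall>b\<in>S. mu b \<in> hom C (X b) (ccod C w1)"
    unfolding mu_def hom_iff using D w1 by simp
  moreover have "\<forall>b\<in>S. \<forall>c\<in>S. (b, c) \<in> r \<longrightarrow> cmp C (mu c) (T b c) = mu b"
    unfolding mu_def using T D w1 by (simp add: comp_assoc)
  ultimately have "\<exists>!w. w \<in> hom C L (ccod C w1) \<and> (\<forall>b\<in>S. cmp C w (lam b) = mu b)"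
    using colim cod_obj[OF w1(1)] unfolding chain_colimit_def by blast
  moreover have "w1 \<in> hom C L (ccod C w1)" "w2 \<in> hom C L (ccod C w1)"
    using w1 w2 cod unfolding hom_iff by simp_all
  ultimately show ?thesis using eq unfolding mu_def by metis
qed

end

context cocomplete_cat
begin

lemma chain_colimit_exists:
  assumes e: "inj (e :: 'i \<times> 'i \<Rightarrow> 'x)"
    and r: "\<forall>b\<in>S. (b, b) \<in> r" "trans r"
    and X: "\<forall>b\<in>S. (X :: 'i \<Rightarrow> 'o) b \<in> obj C"
    and T: "\<forall>b\<in>S. \<forall>c\<in>S. (b, c) \<in> r \<longrightarrow> T b c \<in> hom C (X b) (X c)"
    and T_id: "\<forall>b\<in>S. T b b = idt C (X b)"
    and T_comp: "\<forall>b\<in>S. \<forall>c\<in>S. \<forall>d\<in>S. (b, c) \<in> r \<and> (c, d) \<in> r \<longrightarrow> cmp C (T c d) (T b c) = T b d"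
  shows "chain_colimit C r S X T (fst (some_chain_colimit C r S X T)) (snd (some_chain_colimit C r S X T))"
proof -
  have "diagram (chain_cat r S) C (\<lambda>bb. X (fst bb)) (\<lambda>bc. T (fst bc) (snd bc))"
    unfolding diagram_def chain_cat_simps using X T T_id T_comp by (auto simp: chain_cat_simps)
  then obtain L lam where "is_colimit (chain_cat r S) C (\<lambda>bb. X (fst bb)) (\<lambda>bc. T (fst bc) (snd bc)) L lam"
    using cocomplete_has_colimit[OF cocomplete e category_chain_cat[OF r]] by blast
  then have "chain_colimit C r S X T L (\<lambda>b. lam (b, b))"
    by (rule chain_colimit_of_is_colimit)
  then have "\<exists>x. (\<lambda>(L, lam). chain_colimit C r S X T L lam) x" by auto
  then have "(\<lambda>(L, lam). chain_colimit C r S X T L lam) (some_chain_colimit C r S X T)"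
    unfolding some_chain_colimit_def by (rule someI_ex)
  then show ?thesis by (simp split: prod.splits)
qed

end

context cat_setting
begin

text \<open>Pushouts commute with colimits of chains: if \<open>W b = Z \<squnion>\<^bsub>X b\<^esub> Y b\<close> for a map of chains
  \<open>p : X \<rightarrow> Y\<close> and \<open>a : colim X \<rightarrow> Z\<close>, then \<open>colim W = Z \<squnion>\<^bsub>colim X\<^esub> colim Y\<close>.\<close>

context
  fixes S r s X TX LX lamX Y TY LY lamY p pL a Z lW qW W TW lP qP om
  assumes s: "s \<in> S"
    and total: "\<forall>b\<in>S. \<forall>c\<in>S. (b, c) \<in> r \<or> (c, b) \<in> r"
    and TX: "\<forall>b\<in>S. \<forall>c\<in>S. (b, c) \<in> r \<longrightarrow> TX b c \<in> hom C (X b) (X c)"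
    and TY: "\<forall>b\<in>S. \<forall>c\<in>S. (b, c) \<in> r \<longrightarrow> TY b c \<in> hom C (Y b) (Y c)"
    and p: "\<forall>b\<in>S. p b \<in> hom C (X b) (Y b)"
    and X_colim: "chain_colimit C r S X TX LX lamX"
    and Y_colim: "chain_colimit C r S Y TY LY lamY"
    and pL: "pL \<in> hom C LX LY" "\<forall>b\<in>S. cmp C pL (lamX b) = cmp C (lamY b) (p b)"
    and a: "a \<in> hom C LX Z"
    and W_po: "\<forall>b\<in>S. is_pushout C (p b) (cmp C a (lamX b)) (lW b) (qW b)"
    and W: "\<forall>b\<in>S. W b = ccod C (lW b)"
    and TW: "\<forall>b\<in>S. \<forall>c\<in>S. (b, c) \<in> r \<longrightarrow> TW b c \<in> hom C (W b) (W c) \<and>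
      cmp C (TW b c) (lW b) = lW c \<and> cmp C (TW b c) (qW b) = cmp C (qW c) (TY b c)"
    and P_po: "is_pushout C pL a lP qP"
    and om: "\<forall>b\<in>S. om b \<in> hom C (W b) (ccod C lP) \<and>
      cmp C (om b) (lW b) = lP \<and> cmp C (om b) (qW b) = cmp C qP (lamY b)"
begin

private lemmas X_colimD = chain_colimitD[OF X_colim] and Y_colimD = chain_colimitD[OF Y_colim]

private lemma P_arrs:
  "a \<in> arr C" "cdom C a = LX" "ccod C a = Z" "pL \<in> arr C" "cdom C pL = LX" "ccod C pL = LY"
  "lP \<in> arr C" "cdom C lP = Z" "qP \<in> arr C" "cdom C qP = LY" "ccod C qP = ccod C lP"
  using pushoutD[OF P_po] a pL(1) by (auto simp: hom_iff)

private lemma typing_at: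
  assumes b: "b \<in> S"
  shows "p b \<in> arr C" "cdom C (p b) = X b" "ccod C (p b) = Y b"
    "lW b \<in> arr C" "cdom C (lW b) = Z" "ccod C (lW b) = W b"
    "qW b \<in> arr C" "cdom C (qW b) = Y b" "ccod C (qW b) = W b"
    "cmp C (lW b) (cmp C a (lamX b)) = cmp C (qW b) (p b)"
    "om b \<in> arr C" "cdom C (om b) = W b" "ccod C (om b) = ccod C lP"
    "cmp C (om b) (lW b) = lP" "cmp C (om b) (qW b) = cmp C qP (lamY b)"
  using pushoutD[OF W_po[rule_format, OF b]] p om W b X_colimD P_arrs by (auto simp: hom_iff)

private lemma transition_at:
  assumes "b \<in> S" "c \<in> S" "(b, c) \<in> r"
  shows "TX b c \<in> arr C" "cdom C (TX b c) = X b" "ccod C (TX b c) = X c"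
    "TY b c \<in> arr C" "cdom C (TY b c) = Y b" "ccod C (TY b c) = Y c"
    "TW b c \<in> arr C" "cdom C (TW b c) = W b" "ccod C (TW b c) = W c"
    "cmp C (TW b c) (lW b) = lW c" "cmp C (TW b c) (qW b) = cmp C (qW c) (TY b c)"
  using assms TX TY TW by (auto simp: hom_iff)

private lemma om_cocone:
  assumes bc: "b \<in> S" "c \<in> S" "(b, c) \<in> r"
  shows "cmp C (om c) (TW b c) = om b"
proof (rule pushout_uniq[OF W_po[rule_format, OF bc(1)]])
  show "cmp C (cmp C (om c) (TW b c)) (lW b) = cmp C (om b) (lW b)"
    using typing_at[OF bc(1)] typing_at[OF bc(2)] transition_at[OF bc] by (simp add: comp_assoc)
  show "cmp C (cmp C (om c) (TW b c)) (qW b) = cmp C (om b) (qW b)"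
    using typing_at[OF bc(1)] typing_at[OF bc(2)] transition_at[OF bc] Y_colimD(2-4)[OF bc(2)] Y_colimD(5)[OF bc] P_arrs
    by (simp add: comp_assoc comp_whisker[OF typing_at(15)[OF bc(2)]])
qed (use typing_at[OF bc(1)] typing_at[OF bc(2)] transition_at[OF bc] in simp_all)

private lemma mu_lW_const:
  assumes mu: "\<forall>b\<in>S. mu b \<in> hom C (W b) Q"
    and mu_cocone: "\<forall>b\<in>S. \<forall>c\<in>S. (b, c) \<in> r \<longrightarrow> cmp C (mu c) (TW b c) = mu b"
    and b: "b \<in> S"
  shows "cmp C (mu b) (lW b) = cmp C (mu s) (lW s)"
proof -
  have "cmp C (mu d) (lW d) = cmp C (mu e) (lW e)" if de: "d \<in> S" "e \<in> S" "(d, e) \<in> r" for d e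
    using typing_at[OF de(1)] transition_at[OF de] mu de mu_cocone[rule_format, OF de, symmetric]
    by (simp add: comp_assoc hom_iff)
  then show ?thesis using total b s by metis
qed

private lemma mu_qW_cocone:
  assumes mu: "\<forall>b\<in>S. mu b \<in> hom C (W b) Q"
    and mu_cocone: "\<forall>b\<in>S. \<forall>c\<in>S. (b, c) \<in> r \<longrightarrow> cmp C (mu c) (TW b c) = mu b"
  shows "\<forall>b\<in>S. \<forall>c\<in>S. (b, c) \<in> r \<longrightarrow> cmp C (cmp C (mu c) (qW c)) (TY b c) = cmp C (mu b) (qW b)"
proof (intro ballI impI)
  fix b c assume bc: "b \<in> S" "c \<in> S" "(b, c) \<in> r"
  have "mu c \<in> arr C" "cdom C (mu c) = W c" using mu bc(2) by (simp_all add: hom_iff)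
  then show "cmp C (cmp C (mu c) (qW c)) (TY b c) = cmp C (mu b) (qW b)"
    using typing_at[OF bc(1)] typing_at[OF bc(2)] transition_at(1-10)[OF bc]
    by (simp add: comp_assoc comp_whisker[OF mu_cocone[rule_format, OF bc]] flip: transition_at(11)[OF bc])
qed

private lemma mediating_map:
  assumes Q: "Q \<in> obj C" and mu: "\<forall>b\<in>S. mu b \<in> hom C (W b) Q"
    and mu_cocone: "\<forall>b\<in>S. \<forall>c\<in>S. (b, c) \<in> r \<longrightarrow> cmp C (mu c) (TW b c) = mu b"
  obtains w where "w \<in> arr C" "cdom C w = ccod C lP" "ccod C w = Q" "\<forall>b\<in>S. cmp C w (om b) = mu b"
proof -
  have mu_arr: "mu b \<in> arr C" "cdom C (mu b) = W b" "ccod C (mu b) = Q" if "b \<in> S" for b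
    using mu that unfolding hom_iff by blast+
  define mZ where "mZ = cmp C (mu s) (lW s)"
  note mZ = mu_lW_const[OF mu mu_cocone, folded mZ_def]
  define nu where "nu b = cmp C (mu b) (qW b)" for b
  have nu: "\<forall>b\<in>S. nu b \<in> hom C (Y b) Q"
    unfolding nu_def hom_iff using mu_arr typing_at by simp
  define mY where "mY = colim_map C S LY lamY Q nu"
  note mY = colim_map[OF Y_colim Q nu mu_qW_cocone[OF mu mu_cocone, folded nu_def], folded mY_def]
  have s_arrs: "mu s \<in> arr C" "cdom C (mu s) = W s" "ccod C (mu s) = Q"
    "lW s \<in> arr C" "cdom C (lW s) = Z" "ccod C (lW s) = W s"
    using mu_arr[OF s] typing_at[OF s] by simp_all
  have P_cocone: "cmp C mZ a = cmp C mY pL"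
  proof (rule chain_colimit_uniq[OF X_colim])
    show "\<forall>b\<in>S. \<forall>c\<in>S. (b, c) \<in> r \<longrightarrow> TX b c \<in> arr C \<and> ccod C (TX b c) = X c"
      using TX by (simp add: hom_iff)
    show "\<forall>b\<in>S. cmp C (cmp C mZ a) (lamX b) = cmp C (cmp C mY pL) (lamX b)"
    proof
      fix b assume b: "b \<in> S"
      show "cmp C (cmp C mZ a) (lamX b) = cmp C (cmp C mY pL) (lamX b)"
        using typing_at[OF b] mu_arr[OF b] X_colimD(2-4)[OF b] Y_colimD(2-4)[OF b] mY s_arrs P_arrs
        by (simp add: comp_assoc pL(2) b comp_whisker[OF mY(4)[OF b]] nu_def
            comp_whisker3[OF typing_at(10)[OF b]] flip: mZ[OF b])
    qed
  qed (use s_arrs mY P_arrs in \<open>simp_all add: mZ_def\<close>)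
  define w where "w = copair C lP qP mZ mY"
  have w: "w \<in> arr C" "cdom C w = ccod C lP" "ccod C w = Q" "cmp C w lP = mZ" "cmp C w qP = mY"
    unfolding w_def using copair[OF P_po _ mY(1) _ _ _ P_cocone] s_arrs mY P_arrs
    by (simp_all add: mZ_def)
  have "cmp C w (om b) = mu b" if b: "b \<in> S" for b
  proof (rule pushout_uniq[OF W_po[rule_format, OF b]])
    show "cmp C (cmp C w (om b)) (lW b) = cmp C (mu b) (lW b)"
      using typing_at[OF b] w mZ[OF b] by (simp add: comp_assoc)
    show "cmp C (cmp C w (om b)) (qW b) = cmp C (mu b) (qW b)"
      using typing_at[OF b] w mY(4)[OF b] Y_colimD(2-4)[OF b] P_arrs
      by (simp add: comp_assoc comp_whisker[OF w(5)] nu_def)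
  qed (use typing_at[OF b] w mu_arr[OF b] in simp_all)
  then show ?thesis using that w by blast
qed

private lemma mediating_unique:
  assumes w1: "w1 \<in> arr C" "cdom C w1 = ccod C lP" and w2: "w2 \<in> arr C" "cdom C w2 = ccod C lP"
    and cod: "ccod C w1 = ccod C w2" and eq: "\<forall>b\<in>S. cmp C w1 (om b) = cmp C w2 (om b)"
  shows "w1 = w2"
proof (rule pushout_uniq[OF P_po])
  show "cmp C w1 lP = cmp C w2 lP"
    using typing_at(1-13)[OF s] w1 w2
    by (simp add: comp_assoc comp_whisker[OF eq[rule_format, OF s]] flip: typing_at(14)[OF s])
  show "cmp C w1 qP = cmp C w2 qP"
  proof (rule chain_colimit_uniq[OF Y_colim])
    show "\<forall>b\<in>S. \<forall>c\<in>S. (b, c) \<in> r \<longrightarrow> TY b c \<in> arr C \<and> ccod C (TY b c) = Y c"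
      using TY by (simp add: hom_iff)
    show "\<forall>b\<in>S. cmp C (cmp C w1 qP) (lamY b) = cmp C (cmp C w2 qP) (lamY b)"
    proof
      fix b assume b: "b \<in> S"
      show "cmp C (cmp C w1 qP) (lamY b) = cmp C (cmp C w2 qP) (lamY b)"
        using typing_at(1-14)[OF b] w1 w2 Y_colimD(2-4)[OF b] P_arrs
        by (simp add: comp_assoc comp_whisker[OF eq[rule_format, OF b]] flip: typing_at(15)[OF b])
    qed
  qed (use w1 w2 cod P_arrs in simp_all)
qed (use w1 w2 cod P_arrs in simp_all)

lemma chain_colimit_pushout: "chain_colimit C r S W TW (ccod C lP) om"
  unfolding chain_colimit_def
proof (intro conjI ballI allI impI)
  show "ccod C lP \<in> obj C" using P_arrs cod_obj by blast
  show "om b \<in> hom C (W b) (ccod C lP)" if "b \<in> S" for b using om that by blast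
  show "cmp C (om c) (TW b c) = om b" if "b \<in> S" "c \<in> S" "(b, c) \<in> r" for b c
    using om_cocone that by blast
  fix Q mu
  assume "Q \<in> obj C \<and> (\<forall>b\<in>S. mu b \<in> hom C (W b) Q) \<and>
    (\<forall>b\<in>S. \<forall>c\<in>S. (b, c) \<in> r \<longrightarrow> cmp C (mu c) (TW b c) = mu b)"
  then obtain w where w: "w \<in> arr C" "cdom C w = ccod C lP" "ccod C w = Q" "\<forall>b\<in>S. cmp C w (om b) = mu b"
    using mediating_map by blast
  show "\<exists>!w. w \<in> hom C (ccod C lP) Q \<and> (\<forall>b\<in>S. cmp C w (om b) = mu b)"
  proof (rule ex1I[of _ w])
    fix w' assume "w' \<in> hom C (ccod C lP) Q \<and> (\<forall>b\<in>S. cmp C w' (om b) = mu b)"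
    then show "w' = w" using mediating_unique[of w' w] w by (simp add: hom_iff)
  qed (use w in \<open>simp add: hom_iff\<close>)
qed

end

end

section \<open>The construction\<close>

context
  includes cardinal_syntax
begin

lemma inj_square_into_infinite:
  assumes "infinite (UNIV :: 'x set)" and "inj (e :: 'i \<Rightarrow> 'x)"
  shows "\<exists>e' :: 'i \<times> 'i \<Rightarrow> 'x. inj e'"
proof -
  have "|UNIV :: ('i \<times> 'i) set| \<le>o |UNIV :: 'x set|"
  proof (cases "finite (UNIV :: 'i set)")
    case True
    then have "finite (UNIV :: ('i \<times> 'i) set)" by (metis UNIV_Times_UNIV finite_cartesian_product)
    then show ?thesis
      using assms(1) finite_ordLess_infinite[OF card_of_Well_order card_of_Well_order]
        Field_card_of ordLess_imp_ordLeq by metis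
  next
    case False
    have "|UNIV \<times> UNIV :: ('i \<times> 'i) set| =o |UNIV :: 'i set|"
      using card_of_Times_same_infinite[OF False] .
    moreover have "|UNIV :: 'i set| \<le>o |UNIV :: 'x set|"
      using assms(2) card_of_ordLeq by blast
    ultimately show ?thesis using ordIso_ordLeq_trans by fastforce
  qed
  then show ?thesis using card_of_ordLeq[of "UNIV :: ('i \<times> 'i) set" "UNIV :: 'x set"] by blast
qed

end

locale Phi_cof_sequence = cocomplete_cat C index_type
  for C :: "('o, 'm) cat" and index_type :: "'x itself" +
  fixes I :: "'m set" and r :: "'i rel" and X :: "'i \<Rightarrow> 'o" and T :: "'i \<Rightarrow> 'i \<Rightarrow> 'm"
    and L :: 'o and lam :: "'i \<Rightarrow> 'm" and b0 :: 'i
  assumes small_index: "\<exists>e :: 'i \<Rightarrow> 'x. inj e"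
    and well_order: "Well_order r" and b0: "b0 \<in> Field r" and b0_least: "\<forall>b\<in>Field r. (b0, b) \<in> r"
    and X_seq: "tseq C (base_changes C (Phi C I)) r X T"
    and X_colim: "chain_colimit C r (Field r) X T L lam"
begin

lemma r_refl: "a \<in> Field r \<Longrightarrow> (a, a) \<in> r"
  using wo_rel.REFL[OF wo_rel.intro[OF well_order]] unfolding refl_on_def by blast

lemma r_trans: "trans r"
  using wo_rel.TRANS[OF wo_rel.intro[OF well_order]] .

lemma r_antisym: "(a, b) \<in> r \<Longrightarrow> (b, a) \<in> r \<Longrightarrow> a = b"
  using wo_rel.ANTISYM[OF wo_rel.intro[OF well_order]] unfolding antisym_def by blast

lemma r_total: "a \<in> Field r \<Longrightarrow> b \<in> Field r \<Longrightarrow> (a, b) \<in> r \<or> (b, a) \<in> r"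
  using wo_rel.TOTALS[OF wo_rel.intro[OF well_order]] by blast

lemma immediate_succ_unique: "immediate_succ r b c \<Longrightarrow> immediate_succ r b' c \<Longrightarrow> b = b'"
  unfolding immediate_succ_def using r_total FieldI1 by metis

lemma immediate_succ_below: "immediate_succ r b c \<Longrightarrow> (a, c) \<in> r \<Longrightarrow> a \<noteq> c \<Longrightarrow> (a, b) \<in> r"
  unfolding immediate_succ_def using r_total FieldI1 r_refl by metis

lemma below_b0: "(a, b0) \<in> r \<Longrightarrow> a = b0"
  using r_antisym b0_least FieldI1[of a b0 r] by blast

lemma limit_point_iff: "limit_point r c \<longleftrightarrow> c \<in> Field r \<and> c \<noteq> b0 \<and> \<not> (\<exists>b. immediate_succ r b c)"
  unfolding limit_point_def using b0_least below_b0 by blast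

lemma pair_index_embedding: "\<exists>e :: 'i \<times> 'i \<Rightarrow> 'x. inj e"
  using small_index inj_square_into_infinite[OF infinite_index] by blast

lemma X_obj: "b \<in> Field r \<Longrightarrow> X b \<in> obj C"
  and T_arr: "(b, c) \<in> r \<Longrightarrow> T b c \<in> arr C" "(b, c) \<in> r \<Longrightarrow> cdom C (T b c) = X b"
    "(b, c) \<in> r \<Longrightarrow> ccod C (T b c) = X c"
  and T_id: "b \<in> Field r \<Longrightarrow> T b b = idt C (X b)"
  and T_comp: "(b, c) \<in> r \<Longrightarrow> (c, d) \<in> r \<Longrightarrow> cmp C (T c d) (T b c) = T b d"
  and X_continuous: "limit_point r c \<Longrightarrow> chain_colimit C r (underS r c) X T (X c) (\<lambda>b. T b c)"
  using X_seq unfolding tseq_def hom_iff by blast+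

lemma L_obj: "L \<in> obj C"
  and lam_arr: "b \<in> Field r \<Longrightarrow> lam b \<in> arr C" "b \<in> Field r \<Longrightarrow> cdom C (lam b) = X b"
    "b \<in> Field r \<Longrightarrow> ccod C (lam b) = L"
  using chain_colimitD[OF X_colim] by blast+

lemma lam_T: "(b, c) \<in> r \<Longrightarrow> cmp C (lam c) (T b c) = lam b"
  using chain_colimitD(5)[OF X_colim FieldI1 FieldI2] .

definition predecessor :: "'i \<Rightarrow> 'i" where
  "predecessor c = (THE b. immediate_succ r b c)"

lemma predecessor_eq: "immediate_succ r b c \<Longrightarrow> predecessor c = b"
  unfolding predecessor_def using immediate_succ_unique by blast

text \<open>At a successor \<open>c\<close>, \<open>T (predecessor c) c\<close> is the base change of \<open>cell c : A \<rightarrow> B\<close> in \<open>\<Phi>(I)\<close> along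
  \<open>attach c : A \<rightarrow> X (predecessor c)\<close>; \<open>ext c : B \<rightarrow> K\<close> witnesses \<open>cell c \<in> \<Phi>(I)\<close>.\<close>

definition cell_data :: "'i \<Rightarrow> 'm \<times> 'm \<times> 'm" where
  "cell_data c = (SOME (g, u, g'). g \<in> Phi C I \<and> is_pushout C g u (T (predecessor c) c) g')"

definition cell :: "'i \<Rightarrow> 'm" where "cell c = fst (cell_data c)"
definition attach :: "'i \<Rightarrow> 'm" where "attach c = fst (snd (cell_data c))"
definition cell_in :: "'i \<Rightarrow> 'm" where "cell_in c = snd (snd (cell_data c))"

definition ext :: "'i \<Rightarrow> 'm" where
  "ext c = (SOME k. k \<in> I \<and> k \<in> arr C \<and> cdom C k = ccod C (cell c) \<and> cmp C k (cell c) \<in> I)"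

lemma cell_data:
  assumes "immediate_succ r b c"
  shows "cell c \<in> Phi C I" "is_pushout C (cell c) (attach c) (T b c) (cell_in c)"
    "ext c \<in> I" "ext c \<in> arr C" "cdom C (ext c) = ccod C (cell c)" "cmp C (ext c) (cell c) \<in> I"
proof -
  have "T b c \<in> base_changes C (Phi C I)" using X_seq assms unfolding tseq_def by blast
  then have "\<exists>x. (\<lambda>(g, u, g'). g \<in> Phi C I \<and> is_pushout C g u (T (predecessor c) c) g') x"
    unfolding base_changes_def predecessor_eq[OF assms] by auto
  then have "(\<lambda>(g, u, g'). g \<in> Phi C I \<and> is_pushout C g u (T (predecessor c) c) g') (cell_data c)"
    unfolding cell_data_def by (rule someI_ex)
  then show cell: "cell c \<in> Phi C I" "is_pushout C (cell c) (attach c) (T b c) (cell_in c)"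
    unfolding cell_def attach_def cell_in_def predecessor_eq[OF assms] by (auto split: prod.splits)
  then have "\<exists>k. k \<in> I \<and> k \<in> arr C \<and> cdom C k = ccod C (cell c) \<and> cmp C k (cell c) \<in> I"
    unfolding Phi_def by blast
  then have "ext c \<in> I \<and> ext c \<in> arr C \<and> cdom C (ext c) = ccod C (cell c) \<and> cmp C (ext c) (cell c) \<in> I"
    unfolding ext_def by (rule someI_ex)
  then show "ext c \<in> I" "ext c \<in> arr C" "cdom C (ext c) = ccod C (cell c)" "cmp C (ext c) (cell c) \<in> I"
    by auto
qed

text \<open>The chain \<open>Y\<close> with the comparison maps \<open>p c : X c \<rightarrow> Y c\<close>, by well-founded recursion on \<open>r\<close>;
  the value at \<open>c\<close> is the triple \<open>(Y c, \<lambda>a. TY a c, p c)\<close>. At a successor \<open>c\<close> of \<open>b\<close>, \<open>Y c\<close> is the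
  pushout of \<open>ext c \<circ> cell c \<in> I\<close> along \<open>p b \<circ> attach c\<close>; at limits \<open>Y\<close> is continuous.\<close>

definition Y_step :: "('i \<Rightarrow> 'o \<times> ('i \<Rightarrow> 'm) \<times> 'm) \<Rightarrow> 'i \<Rightarrow> 'o \<times> ('i \<Rightarrow> 'm) \<times> 'm" where
  "Y_step F c =
    (if c = b0 then (X b0, \<lambda>a. idt C (X b0), idt C (X b0))
     else if \<exists>b. immediate_succ r b c then
       (let b = predecessor c; pb = snd (snd (F b));
            vz = some_pushout C (cmp C (ext c) (cell c)) (cmp C pb (attach c))
        in (ccod C (fst vz), \<lambda>a. if a = c then idt C (ccod C (fst vz)) else cmp C (fst vz) (fst (snd (F b)) a),
            copair C (T b c) (cell_in c) (cmp C (fst vz) pb) (cmp C (snd vz) (ext c))))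
     else
       (let Lm = some_chain_colimit C r (underS r c) (\<lambda>a. fst (F a)) (\<lambda>a a'. fst (snd (F a')) a)
        in (fst Lm, \<lambda>a. if a = c then idt C (fst Lm) else snd Lm a,
            colim_map C (underS r c) (X c) (\<lambda>a. T a c) (fst Lm) (\<lambda>a. cmp C (snd Lm a) (snd (snd (F a)))))))"

definition Y_recursion :: "('i \<Rightarrow> 'o \<times> ('i \<Rightarrow> 'm) \<times> 'm) \<Rightarrow> 'i \<Rightarrow> 'o \<times> ('i \<Rightarrow> 'm) \<times> 'm" where
  "Y_recursion F c = Y_step (\<lambda>a. if a \<in> underS r c then F a else undefined) c"

lemma adm_wo_Y_recursion: "wo_rel.adm_wo r Y_recursion"
  unfolding wo_rel.adm_wo_def[OF wo_rel.intro[OF well_order]] Y_recursion_def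
proof (intro allI impI)
  fix F G :: "'i \<Rightarrow> 'o \<times> ('i \<Rightarrow> 'm) \<times> 'm" and c
  assume "\<forall>a\<in>underS r c. F a = G a"
  then have "(\<lambda>a. if a \<in> underS r c then F a else undefined) = (\<lambda>a. if a \<in> underS r c then G a else undefined)"
    by auto
  then show "Y_step (\<lambda>a. if a \<in> underS r c then F a else undefined) c =
      Y_step (\<lambda>a. if a \<in> underS r c then G a else undefined) c"
    by simp
qed

definition Y_data :: "'i \<Rightarrow> 'o \<times> ('i \<Rightarrow> 'm) \<times> 'm" where
  "Y_data = wo_rel.worec r Y_recursion"

definition Y :: "'i \<Rightarrow> 'o" where "Y c = fst (Y_data c)"
definition TY :: "'i \<Rightarrow> 'i \<Rightarrow> 'm" where "TY a c = fst (snd (Y_data c)) a"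
definition p :: "'i \<Rightarrow> 'm" where "p c = snd (snd (Y_data c))"

definition Y_succ_legs :: "'i \<Rightarrow> 'm \<times> 'm" where
  "Y_succ_legs c = some_pushout C (cmp C (ext c) (cell c)) (cmp C (p (predecessor c)) (attach c))"

definition vY :: "'i \<Rightarrow> 'm" where "vY c = fst (Y_succ_legs c)"
definition zY :: "'i \<Rightarrow> 'm" where "zY c = snd (Y_succ_legs c)"

definition Y_limit :: "'i \<Rightarrow> 'o \<times> ('i \<Rightarrow> 'm)" where
  "Y_limit c = some_chain_colimit C r (underS r c) Y TY"

lemma Y_data_eq: "Y_data c = Y_step (\<lambda>a. if a \<in> underS r c then Y_data a else undefined) c"
  using wo_rel.worec_fixpoint[OF wo_rel.intro[OF well_order] adm_wo_Y_recursion]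
  unfolding Y_data_def Y_recursion_def by metis

lemma Y_b0: "Y b0 = X b0" "TY a b0 = idt C (X b0)" "p b0 = idt C (X b0)"
  using Y_data_eq[of b0] unfolding Y_step_def Y_def TY_def p_def by simp_all

lemma Y_succ:
  assumes imm: "immediate_succ r b c"
  shows "Y c = ccod C (vY c)"
    "TY a c = (if a = c then idt C (Y c) else cmp C (vY c) (TY a b))"
    "p c = copair C (T b c) (cell_in c) (cmp C (vY c) (p b)) (cmp C (zY c) (ext c))"
proof -
  have "c \<noteq> b0" using imm below_b0 unfolding immediate_succ_def by blast
  moreover have "b \<in> underS r c" using imm unfolding immediate_succ_def underS_def by blast
  ultimately show "Y c = ccod C (vY c)"
    "TY a c = (if a = c then idt C (Y c) else cmp C (vY c) (TY a b))"
    "p c = copair C (T b c) (cell_in c) (cmp C (vY c) (p b)) (cmp C (zY c) (ext c))"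
    using Y_data_eq[of c] imm unfolding Y_step_def Y_def TY_def p_def vY_def zY_def Y_succ_legs_def
      predecessor_eq[OF imm] Let_def by auto
qed

lemma Y_lim:
  assumes c: "c \<in> Field r" "c \<noteq> b0" "\<not> (\<exists>b. immediate_succ r b c)"
  shows "Y c = fst (Y_limit c)"
    "TY a c = (if a = c then idt C (Y c) else snd (Y_limit c) a)"
    "p c = colim_map C (underS r c) (X c) (\<lambda>a. T a c) (Y c) (\<lambda>a. cmp C (snd (Y_limit c) a) (p a))"
proof -
  let ?F = "\<lambda>a. if a \<in> underS r c then Y_data a else undefined"
  have restrict: "chain_colimit C r (underS r c) (\<lambda>a. fst (?F a)) (\<lambda>a a'. fst (snd (?F a')) a) =
      chain_colimit C r (underS r c) Y TY"
    by (intro ext chain_colimit_cong) (simp_all add: Y_def TY_def)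
  have "some_chain_colimit C r (underS r c) (\<lambda>a. fst (?F a)) (\<lambda>a a'. fst (snd (?F a')) a) = Y_limit c"
    unfolding Y_limit_def some_chain_colimit_def by (simp only: restrict)
  moreover have "colim_map C (underS r c) (X c) (\<lambda>a. T a c) L' (\<lambda>a. cmp C (lm a) (snd (snd (?F a)))) =
      colim_map C (underS r c) (X c) (\<lambda>a. T a c) L' (\<lambda>a. cmp C (lm a) (p a))" for L' lm
    by (rule colim_map_cong) (simp add: p_def)
  ultimately show "Y c = fst (Y_limit c)"
    "TY a c = (if a = c then idt C (Y c) else snd (Y_limit c) a)"
    "p c = colim_map C (underS r c) (X c) (\<lambda>a. T a c) (Y c) (\<lambda>a. cmp C (snd (Y_limit c) a) (p a))"
    using Y_data_eq[of c] c unfolding Y_step_def Y_def TY_def Let_def by (simp_all add: p_def)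
qed

definition Y_invariant :: "'i \<Rightarrow> bool" where
  "Y_invariant c \<longleftrightarrow> Y c \<in> obj C \<and> p c \<in> hom C (X c) (Y c) \<and> TY c c = idt C (Y c) \<and>
     (\<forall>a. (a, c) \<in> r \<longrightarrow> TY a c \<in> hom C (Y a) (Y c) \<and> cmp C (p c) (T a c) = cmp C (TY a c) (p a)) \<and>
     (\<forall>a a'. (a, a') \<in> r \<and> (a', c) \<in> r \<longrightarrow> cmp C (TY a' c) (TY a a') = TY a c)"

lemma Y_invariantD:
  assumes "Y_invariant c"
  shows "Y c \<in> obj C" "p c \<in> arr C" "cdom C (p c) = X c" "ccod C (p c) = Y c" "TY c c = idt C (Y c)"
    "\<And>a. (a, c) \<in> r \<Longrightarrow> TY a c \<in> arr C" "\<And>a. (a, c) \<in> r \<Longrightarrow> cdom C (TY a c) = Y a"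
    "\<And>a. (a, c) \<in> r \<Longrightarrow> ccod C (TY a c) = Y c"
    "\<And>a. (a, c) \<in> r \<Longrightarrow> cmp C (p c) (T a c) = cmp C (TY a c) (p a)"
    "\<And>a a'. (a, a') \<in> r \<Longrightarrow> (a', c) \<in> r \<Longrightarrow> cmp C (TY a' c) (TY a a') = TY a c"
  using assms unfolding Y_invariant_def hom_iff by blast+

lemma Y_invariantI:
  assumes c: "c \<in> Field r" and IH: "\<forall>a\<in>underS r c. Y_invariant a"
    and Y: "Y c \<in> obj C" and p: "p c \<in> hom C (X c) (Y c)" and TY_cc: "TY c c = idt C (Y c)"
    and below: "\<And>a. a \<in> underS r c \<Longrightarrow>
      TY a c \<in> hom C (Y a) (Y c) \<and> cmp C (p c) (T a c) = cmp C (TY a c) (p a)"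
    and comp: "\<And>a a'. a \<in> underS r c \<Longrightarrow> a' \<in> underS r c \<Longrightarrow> (a, a') \<in> r \<Longrightarrow>
      cmp C (TY a' c) (TY a a') = TY a c"
  shows "Y_invariant c"
proof -
  have natural: "TY a c \<in> hom C (Y a) (Y c) \<and> cmp C (p c) (T a c) = cmp C (TY a c) (p a)"
    if ac: "(a, c) \<in> r" for a
  proof (cases "a = c")
    case True
    then show ?thesis using Y p TY_cc T_id[OF c] by (simp add: hom_iff)
  next
    case False
    then show ?thesis using below ac by (simp add: underS_def)
  qed
  have functorial: "cmp C (TY a' c) (TY a a') = TY a c" if aa': "(a, a') \<in> r" "(a', c) \<in> r" for a a'
  proof (cases "a' = c")
    case True
    then show ?thesis using natural[of a] aa' Y TY_cc by (simp add: hom_iff)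
  next
    case False
    then have a': "a' \<in> underS r c" using aa' by (simp add: underS_def)
    show ?thesis
    proof (cases "a = a'")
      case True
      then show ?thesis using below[OF a'] Y_invariantD(5)[OF IH[rule_format, OF a']] by (simp add: hom_iff)
    next
      case False
      then have "a \<in> underS r c"
        using aa' a' r_antisym r_trans unfolding underS_def trans_def by blast
      then show ?thesis using comp a' aa' by blast
    qed
  qed
  show ?thesis unfolding Y_invariant_def using Y p TY_cc natural functorial by blast
qed

lemma Y_invariant_b0: "Y_invariant b0"
  by (rule Y_invariantI) (use b0 X_obj[OF b0] Y_b0 in \<open>auto simp: hom_iff underS_def dest: below_b0\<close>)

lemma Y_succ_facts:
  assumes imm: "immediate_succ r b c"
    and pb: "p b \<in> arr C" "cdom C (p b) = X b" "ccod C (p b) = Y b"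
  shows "is_pushout C (cmp C (ext c) (cell c)) (cmp C (p b) (attach c)) (vY c) (zY c)"
    "vY c \<in> arr C" "cdom C (vY c) = Y b" "ccod C (vY c) = Y c"
    "p c \<in> arr C" "cdom C (p c) = X c" "ccod C (p c) = Y c" "cmp C (p c) (T b c) = cmp C (vY c) (p b)"
    "cmp C (p c) (cell_in c) = cmp C (zY c) (ext c)"
proof -
  note cell = cell_data[OF imm] and cell_po = pushoutD[OF cell_data(2)[OF imm]]
  have bc: "(b, c) \<in> r" using imm unfolding immediate_succ_def by blast
  have attach: "ccod C (attach c) = X b" using cell_po(6) T_arr[OF bc] by simp
  show Y_po: "is_pushout C (cmp C (ext c) (cell c)) (cmp C (p b) (attach c)) (vY c) (zY c)"
    using some_pushout[of "cmp C (ext c) (cell c)" "cmp C (p b) (attach c)"] cell cell_po pb attach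
    unfolding vY_def zY_def Y_succ_legs_def predecessor_eq[OF imm] by simp
  note Y_po' = pushoutD[OF Y_po]
  show v: "vY c \<in> arr C" "cdom C (vY c) = Y b" "ccod C (vY c) = Y c"
    using Y_po' pb attach cell_po Y_succ(1)[OF imm] by simp_all
  have z: "zY c \<in> arr C" "cdom C (zY c) = ccod C (ext c)" "ccod C (zY c) = Y c"
    using Y_po' cell cell_po Y_succ(1)[OF imm] by simp_all
  have square: "cmp C (cmp C (vY c) (p b)) (attach c) = cmp C (cmp C (zY c) (ext c)) (cell c)"
    using Y_po'(9) v z pb attach cell cell_po by (simp add: comp_assoc)
  note p_c = copair[OF cell_data(2)[OF imm], of "cmp C (vY c) (p b)" "cmp C (zY c) (ext c)", folded Y_succ(3)[OF imm]]
  show "p c \<in> arr C" "cdom C (p c) = X c" "ccod C (p c) = Y c" "cmp C (p c) (T b c) = cmp C (vY c) (p b)"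
    "cmp C (p c) (cell_in c) = cmp C (zY c) (ext c)"
    using p_c[OF _ _ _ _ _ square] v z pb attach cell cell_po T_arr[OF bc] by simp_all
qed

lemma Y_invariant_succ:
  assumes imm: "immediate_succ r b c" and IH: "\<forall>a\<in>underS r c. Y_invariant a"
  shows "Y_invariant c"
proof -
  have bc: "(b, c) \<in> r" "b \<noteq> c" using imm unfolding immediate_succ_def by blast+
  then have Yb: "Y_invariant b" using IH by (simp add: underS_def)
  note b = Y_invariantD[OF Yb]
  note F = Y_succ_facts[OF imm b(2-4)]
  have below_b: "(a, b) \<in> r" if "a \<in> underS r c" for a
    using immediate_succ_below[OF imm] that unfolding underS_def by blast
  show ?thesis
  proof (rule Y_invariantI[OF FieldI2[OF bc(1)] IH])
    show "Y c \<in> obj C" using F(4) cod_obj F(2) by metis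
    show "p c \<in> hom C (X c) (Y c)" using F(5-7) by (simp add: hom_iff)
    show "TY c c = idt C (Y c)" using Y_succ(2)[OF imm] by simp
  next
    fix a assume a: "a \<in> underS r c"
    note ab = below_b[OF a]
    have Ya: "Y_invariant a" using IH a by blast
    have TY_ac: "TY a c = cmp C (vY c) (TY a b)" using Y_succ(2)[OF imm] a by (simp add: underS_def)
    have "cmp C (p c) (T a c) = cmp C (p c) (cmp C (T b c) (T a b))"
      using T_comp[OF ab bc(1)] by simp
    also have "\<dots> = cmp C (vY c) (cmp C (p b) (T a b))"
      using T_arr[OF ab] T_arr[OF bc(1)] F(2,3,5-7) b(2-4) by (simp add: comp_assoc comp_whisker[OF F(8)])
    also have "\<dots> = cmp C (TY a c) (p a)"
      using TY_ac b(6-9)[OF ab] Y_invariantD(2-4)[OF Ya] F(2,3) by (simp add: comp_assoc)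
    finally show "TY a c \<in> hom C (Y a) (Y c) \<and> cmp C (p c) (T a c) = cmp C (TY a c) (p a)"
      using TY_ac b(6-8)[OF ab] F(2-4) by (simp add: hom_iff)
  next
    fix a a' assume a: "a \<in> underS r c" and a': "a' \<in> underS r c" and aa': "(a, a') \<in> r"
    have Ya': "Y_invariant a'" using IH a' by blast
    show "cmp C (TY a' c) (TY a a') = TY a c"
      using Y_succ(2)[OF imm] a a' b(10)[OF aa' below_b[OF a']] b(6-8)[OF below_b[OF a']]
        Y_invariantD(6-8)[OF Ya' aa'] F(2,3)
      by (simp add: underS_def comp_assoc)
  qed
qed

lemma Y_limit_colim:
  assumes c: "c \<in> Field r" "c \<noteq> b0" "\<not> (\<exists>b. immediate_succ r b c)"
    and IH: "\<forall>a\<in>underS r c. Y_invariant a"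
  shows "chain_colimit C r (underS r c) Y TY (Y c) (snd (Y_limit c))"
proof -
  let ?S = "underS r c"
  obtain e :: "'i \<times> 'i \<Rightarrow> 'x" where e: "inj e" using pair_index_embedding by blast
  have "chain_colimit C r ?S Y TY (fst (Y_limit c)) (snd (Y_limit c))"
    unfolding Y_limit_def
  proof (rule chain_colimit_exists[OF e])
    show "\<forall>b\<in>?S. (b, b) \<in> r" using r_refl FieldI1[of _ c r] unfolding underS_def by blast
    show "trans r" by (rule r_trans)
    show "\<forall>b\<in>?S. Y b \<in> obj C" "\<forall>b\<in>?S. TY b b = idt C (Y b)"
      using IH Y_invariantD(1,5) by blast+
    show "\<forall>b\<in>?S. \<forall>b'\<in>?S. (b, b') \<in> r \<longrightarrow> TY b b' \<in> hom C (Y b) (Y b')"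
      using IH Y_invariantD(6-8) unfolding hom_iff by blast
    show "\<forall>b\<in>?S. \<forall>b'\<in>?S. \<forall>b''\<in>?S. (b, b') \<in> r \<and> (b', b'') \<in> r \<longrightarrow>
        cmp C (TY b' b'') (TY b b') = TY b b''"
      using IH Y_invariantD(10) by blast
  qed
  then show ?thesis using Y_lim(1)[OF c] by simp
qed

lemma Y_limit_p:
  assumes c: "c \<in> Field r" "c \<noteq> b0" "\<not> (\<exists>b. immediate_succ r b c)"
    and IH: "\<forall>a\<in>underS r c. Y_invariant a"
  shows "p c \<in> arr C" "cdom C (p c) = X c" "ccod C (p c) = Y c"
    "\<And>a. a \<in> underS r c \<Longrightarrow> cmp C (p c) (T a c) = cmp C (snd (Y_limit c) a) (p a)"
proof -
  let ?S = "underS r c"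
  note D = chain_colimitD[OF Y_limit_colim[OF c IH]]
  define mu where "mu a = cmp C (snd (Y_limit c) a) (p a)" for a
  have mu: "\<forall>a\<in>?S. mu a \<in> hom C (X a) (Y c)"
  proof
    fix a assume a: "a \<in> ?S"
    show "mu a \<in> hom C (X a) (Y c)"
      unfolding mu_def hom_iff using D(2-4)[OF a] Y_invariantD(2-4)[OF IH[rule_format, OF a]] by simp
  qed
  have mu_cocone: "\<forall>a\<in>?S. \<forall>a'\<in>?S. (a, a') \<in> r \<longrightarrow> cmp C (mu a') (T a a') = mu a"
  proof (intro ballI impI)
    fix a a' assume aa': "a \<in> ?S" "a' \<in> ?S" "(a, a') \<in> r"
    note Ya = Y_invariantD[OF IH[rule_format, OF aa'(1)]] and Ya' = Y_invariantD[OF IH[rule_format, OF aa'(2)]]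
    show "cmp C (mu a') (T a a') = mu a"
      unfolding mu_def using Ya(2-4) Ya'(2-4) Ya'(6-8)[OF aa'(3)] T_arr[OF aa'(3)] D(2-4)[OF aa'(2)]
      by (simp add: comp_assoc Ya'(9)[OF aa'(3)] comp_whisker[OF D(5)[OF aa']])
  qed
  have lim: "limit_point r c" using c limit_point_iff by blast
  have p_eq: "p c = colim_map C ?S (X c) (\<lambda>a. T a c) (Y c) mu"
    unfolding mu_def by (rule Y_lim(3)[OF c])
  show "p c \<in> arr C" "cdom C (p c) = X c" "ccod C (p c) = Y c"
    "\<And>a. a \<in> ?S \<Longrightarrow> cmp C (p c) (T a c) = cmp C (snd (Y_limit c) a) (p a)"
    using colim_map[OF X_continuous[OF lim] D(1) mu mu_cocone] unfolding p_eq[symmetric]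
    by (simp_all add: mu_def)
qed

lemma Y_invariant_limit:
  assumes c: "c \<in> Field r" "c \<noteq> b0" "\<not> (\<exists>b. immediate_succ r b c)"
    and IH: "\<forall>a\<in>underS r c. Y_invariant a"
  shows "Y_invariant c"
proof -
  note F = Y_limit_p[OF c IH]
  note D = chain_colimitD[OF Y_limit_colim[OF c IH]]
  have TY_c: "TY a c = snd (Y_limit c) a" if "a \<in> underS r c" for a
    using Y_lim(2)[OF c] that by (simp add: underS_def)
  show ?thesis
  proof (rule Y_invariantI[OF c(1) IH])
    show "Y c \<in> obj C" using D(1) .
    show "p c \<in> hom C (X c) (Y c)" using F(1-3) by (simp add: hom_iff)
    show "TY c c = idt C (Y c)" using Y_lim(2)[OF c] by simp
  next
    fix a assume a: "a \<in> underS r c"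
    show "TY a c \<in> hom C (Y a) (Y c) \<and> cmp C (p c) (T a c) = cmp C (TY a c) (p a)"
      using D(2-4)[OF a] F(4)[OF a] TY_c[OF a] by (simp add: hom_iff)
  next
    fix a a' assume "a \<in> underS r c" "a' \<in> underS r c" "(a, a') \<in> r"
    then show "cmp C (TY a' c) (TY a a') = TY a c" using D(5) TY_c by simp
  qed
qed

lemma Y_invariant: "c \<in> Field r \<Longrightarrow> Y_invariant c"
proof (induction c rule: wo_rel.well_order_induct[OF wo_rel.intro[OF well_order]])
  case (1 c)
  have IH: "\<forall>a\<in>underS r c. Y_invariant a"
  proof
    fix a assume "a \<in> underS r c"
    then show "Y_invariant a" using 1(1) FieldI1[of a c r] by (simp add: underS_def)
  qed
  consider "c = b0" | b where "immediate_succ r b c" | "c \<noteq> b0" "\<not> (\<exists>b. immediate_succ r b c)"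
    by blast
  then show ?case
  proof cases
    case 1
    then show ?thesis using Y_invariant_b0 by simp
  next
    case (2 b)
    then show ?thesis using Y_invariant_succ IH by blast
  next
    case 3
    then show ?thesis using Y_invariant_limit[OF 1(2) _ _ IH] by blast
  qed
qed

lemma Y_obj: "b \<in> Field r \<Longrightarrow> Y b \<in> obj C"
  and p_arr: "b \<in> Field r \<Longrightarrow> p b \<in> arr C" "b \<in> Field r \<Longrightarrow> cdom C (p b) = X b"
    "b \<in> Field r \<Longrightarrow> ccod C (p b) = Y b"
  and TY_id: "b \<in> Field r \<Longrightarrow> TY b b = idt C (Y b)"
  by (simp_all add: Y_invariantD[OF Y_invariant])

lemma
  assumes bc: "(b, c) \<in> r"
  shows TY_arr: "TY b c \<in> arr C" "cdom C (TY b c) = Y b" "ccod C (TY b c) = Y c"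
    and p_natural: "cmp C (p c) (T b c) = cmp C (TY b c) (p b)"
  using Y_invariantD(6-9)[OF Y_invariant[OF FieldI2[OF bc]] bc] by simp_all

lemma TY_comp: "(b, c) \<in> r \<Longrightarrow> (c, d) \<in> r \<Longrightarrow> cmp C (TY c d) (TY b c) = TY b d"
  using Y_invariantD(10)[OF Y_invariant[OF FieldI2]] by simp

lemma TY_succ:
  assumes imm: "immediate_succ r b c"
  shows "TY b c = vY c"
proof -
  have bc: "(b, c) \<in> r" "b \<noteq> c" using imm unfolding immediate_succ_def by blast+
  have b: "b \<in> Field r" using FieldI1[OF bc(1)] .
  show ?thesis
    using Y_succ(2)[OF imm, of b] bc(2) TY_id[OF b] Y_succ_facts(2,3)[OF imm p_arr[OF b]] by simp
qed

lemma Y_continuous: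
  assumes "limit_point r c"
  shows "chain_colimit C r (underS r c) Y TY (Y c) (\<lambda>b. TY b c)"
proof -
  have c: "c \<in> Field r" "c \<noteq> b0" "\<not> (\<exists>b. immediate_succ r b c)"
    using assms limit_point_iff by blast+
  have IH: "\<forall>a\<in>underS r c. Y_invariant a"
  proof
    fix a assume "a \<in> underS r c"
    then show "Y_invariant a" using Y_invariant FieldI1[of a c r] by (simp add: underS_def)
  qed
  have "chain_colimit C r (underS r c) Y TY (Y c) (snd (Y_limit c)) =
      chain_colimit C r (underS r c) Y TY (Y c) (\<lambda>b. TY b c)"
    by (rule chain_colimit_cong) (use Y_lim(2)[OF c] in \<open>simp_all add: underS_def\<close>)
  then show ?thesis using Y_limit_colim[OF c IH] by simp
qed

lemma Y_seq: "tseq C (base_changes C I) r Y TY"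
  unfolding tseq_def
proof (intro conjI allI impI ballI)
  fix b c assume imm: "immediate_succ r b c"
  then have "b \<in> Field r" using FieldI1 unfolding immediate_succ_def by fast
  then have "is_pushout C (cmp C (ext c) (cell c)) (cmp C (p b) (attach c)) (TY b c) (zY c)"
    using Y_succ_facts(1)[OF imm] p_arr TY_succ[OF imm] by simp
  then show "TY b c \<in> base_changes C I"
    unfolding base_changes_def using cell_data(6)[OF imm] by blast
next
  fix b c assume "(b, c) \<in> r"
  then show "TY b c \<in> hom C (Y b) (Y c)" using TY_arr by (simp add: hom_iff)
next
  fix b c d assume "(b, c) \<in> r \<and> (c, d) \<in> r"
  then show "cmp C (TY c d) (TY b c) = TY b d" using TY_comp by blast
qed (simp_all add: Y_obj TY_id Y_continuous)

definition LY :: 'o where "LY = fst (some_chain_colimit C r (Field r) Y TY)"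
definition lamY :: "'i \<Rightarrow> 'm" where "lamY = snd (some_chain_colimit C r (Field r) Y TY)"

lemma Y_colim: "chain_colimit C r (Field r) Y TY LY lamY"
proof -
  obtain e :: "'i \<times> 'i \<Rightarrow> 'x" where "inj e" using pair_index_embedding by blast
  then show ?thesis unfolding LY_def lamY_def
  proof (rule chain_colimit_exists)
    show "\<forall>b\<in>Field r. \<forall>c\<in>Field r. (b, c) \<in> r \<longrightarrow> TY b c \<in> hom C (Y b) (Y c)"
      using TY_arr by (simp add: hom_iff)
    show "\<forall>b\<in>Field r. \<forall>c\<in>Field r. \<forall>d\<in>Field r. (b, c) \<in> r \<and> (c, d) \<in> r \<longrightarrow>
        cmp C (TY c d) (TY b c) = TY b d"
      using TY_comp by blast
  qed (simp_all add: r_refl r_trans Y_obj TY_id)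
qed

definition h :: 'm where "h = colim_map C (Field r) L lam LY (\<lambda>b. cmp C (lamY b) (p b))"

lemma h: "h \<in> arr C" "cdom C h = L" "ccod C h = LY"
    "\<And>b. b \<in> Field r \<Longrightarrow> cmp C h (lam b) = cmp C (lamY b) (p b)"
proof -
  note D = chain_colimitD[OF Y_colim]
  have "\<forall>b\<in>Field r. cmp C (lamY b) (p b) \<in> hom C (X b) LY"
    using D p_arr by (simp add: hom_iff)
  moreover have "\<forall>b\<in>Field r. \<forall>c\<in>Field r. (b, c) \<in> r \<longrightarrow>
      cmp C (cmp C (lamY c) (p c)) (T b c) = cmp C (lamY b) (p b)"
    using D p_arr T_arr TY_arr by (simp add: comp_assoc p_natural comp_whisker[OF D(5)])
  ultimately show "h \<in> arr C" "cdom C h = L" "ccod C h = LY"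
    "\<And>b. b \<in> Field r \<Longrightarrow> cmp C h (lam b) = cmp C (lamY b) (p b)"
    using colim_map[OF X_colim D(1)] unfolding h_def by simp_all
qed

lemma h_lam_b0_cof_reg: "cmp C h (lam b0) \<in> cof_reg TYPE('i) C I"
proof -
  have "cmp C h (lam b0) = lamY b0"
    using h(4)[OF b0] Y_b0(3) chain_colimitD(2,3)[OF Y_colim b0] Y_b0(1) by simp
  then show ?thesis unfolding cof_reg_def tcomp_def mem_Collect_eq
    using well_order b0 b0_least Y_seq Y_colim by blast
qed

text \<open>As \<open>p b0\<close> is an identity, \<open>W b0\<close> can be taken to be \<open>L\<close> itself, so that \<open>W\<close> exhibits \<open>h\<close>
  as a transfinite composition.\<close>

definition W_legs :: "'i \<Rightarrow> 'm \<times> 'm" where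
  "W_legs b = (if b = b0 then (idt C L, lam b0) else some_pushout C (p b) (lam b))"

definition lW :: "'i \<Rightarrow> 'm" where "lW b = fst (W_legs b)"
definition qW :: "'i \<Rightarrow> 'm" where "qW b = snd (W_legs b)"
definition W :: "'i \<Rightarrow> 'o" where "W b = ccod C (lW b)"

lemma W_po:
  assumes b: "b \<in> Field r"
  shows "is_pushout C (p b) (lam b) (lW b) (qW b)"
proof (cases "b = b0")
  case True
  then show ?thesis
    using pushout_along_id(2)[OF lam_arr(1)[OF b0]] lam_arr[OF b0] Y_b0(3)
    unfolding lW_def qW_def W_legs_def by simp
next
  case False
  then show ?thesis
    using some_pushout[of "p b" "lam b"] p_arr[OF b] lam_arr[OF b] unfolding lW_def qW_def W_legs_def by simp
qed

lemma W_arrs: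
  assumes b: "b \<in> Field r"
  shows "lW b \<in> arr C" "cdom C (lW b) = L" "ccod C (lW b) = W b"
    "qW b \<in> arr C" "cdom C (qW b) = Y b" "ccod C (qW b) = W b"
    "cmp C (lW b) (lam b) = cmp C (qW b) (p b)"
  using pushoutD[OF W_po[OF b]] lam_arr[OF b] p_arr[OF b] unfolding W_def by simp_all

lemma W_b0: "W b0 = L" "lW b0 = idt C L"
  unfolding W_def lW_def W_legs_def using L_obj by simp_all

definition TW :: "'i \<Rightarrow> 'i \<Rightarrow> 'm" where
  "TW b c = copair C (lW b) (qW b) (lW c) (cmp C (qW c) (TY b c))"

lemma TW:
  assumes bc: "(b, c) \<in> r"
  shows "TW b c \<in> arr C" "cdom C (TW b c) = W b" "ccod C (TW b c) = W c"
    "cmp C (TW b c) (lW b) = lW c" "cmp C (TW b c) (qW b) = cmp C (qW c) (TY b c)"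
proof -
  have b: "b \<in> Field r" and c: "c \<in> Field r" using FieldI1[OF bc] FieldI2[OF bc] .
  note arrs = W_arrs[OF b] W_arrs[OF c] TY_arr[OF bc] lam_arr[OF b] lam_arr[OF c] p_arr[OF b] p_arr[OF c]
    T_arr[OF bc]
  have "cmp C (lW c) (lam b) = cmp C (cmp C (qW c) (TY b c)) (p b)"
    using arrs by (simp add: comp_assoc comp_whisker[OF W_arrs(7)[OF c]] p_natural[OF bc] flip: lam_T[OF bc])
  then show "TW b c \<in> arr C" "cdom C (TW b c) = W b" "ccod C (TW b c) = W c"
    "cmp C (TW b c) (lW b) = lW c" "cmp C (TW b c) (qW b) = cmp C (qW c) (TY b c)"
    using copair[OF W_po[OF b], of "lW c" "cmp C (qW c) (TY b c)"] arrs unfolding TW_def by simp_all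
qed

lemma TW_id:
  assumes b: "b \<in> Field r"
  shows "TW b b = idt C (W b)"
proof -
  have W: "W b \<in> obj C" using W_arrs(1,3)[OF b] cod_obj by metis
  show ?thesis
    by (rule pushout_uniq[OF W_po[OF b]]) (use W TW[OF r_refl[OF b]] W_arrs[OF b] TY_id[OF b] in simp_all)
qed

lemma TW_comp:
  assumes bc: "(b, c) \<in> r" and cd: "(c, d) \<in> r"
  shows "cmp C (TW c d) (TW b c) = TW b d"
proof -
  have bd: "(b, d) \<in> r" using r_trans bc cd unfolding trans_def by blast
  note arrs = TW[OF bc] TW[OF cd] TW[OF bd] TY_arr[OF bc] TY_arr[OF cd] W_arrs[OF FieldI1[OF bc]]
    W_arrs[OF FieldI2[OF bc]] W_arrs[OF FieldI2[OF cd]]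
  show ?thesis
  proof (rule pushout_uniq[OF W_po[OF FieldI1[OF bc]]])
    show "cmp C (cmp C (TW c d) (TW b c)) (qW b) = cmp C (TW b d) (qW b)"
      using arrs by (simp add: comp_assoc comp_whisker[OF TW(5)[OF cd]] TY_comp[OF bc cd])
  qed (use arrs in \<open>simp_all add: comp_assoc\<close>)
qed

lemma TW_succ:
  assumes imm: "immediate_succ r b c"
  shows "TW b c \<in> base_changes C I"
proof -
  have bc: "(b, c) \<in> r" using imm unfolding immediate_succ_def by blast
  have b: "b \<in> Field r" and c: "c \<in> Field r" using FieldI1[OF bc] FieldI2[OF bc] .
  note cell = cell_data[OF imm] and cell_po = pushoutD[OF cell_data(2)[OF imm]]
  note F = Y_succ_facts[OF imm p_arr[OF b]]
  have "is_pushout C (ext c) (cmp C (lW b) (cmp C (lam c) (cell_in c))) (TW b c) (cmp C (qW c) (zY c))"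
  proof (rule cell_extension_pushout[OF cell(2) F(1) F(8,9) _ W_po[OF c] TW(4)[OF bc]])
    show "is_pushout C (p b) (cmp C (lam c) (T b c)) (lW b) (qW b)"
      using W_po[OF b] lam_T[OF bc] by simp
    show "cmp C (TW b c) (qW b) = cmp C (qW c) (vY c)" using TW(5)[OF bc] TY_succ[OF imm] by simp
    show "cell c \<in> hom C (cdom C (cell c)) (ccod C (cell c))"
      "attach c \<in> hom C (cdom C (cell c)) (X b)" "T b c \<in> hom C (X b) (X c)"
      "cell_in c \<in> hom C (ccod C (cell c)) (X c)" "ext c \<in> hom C (ccod C (cell c)) (ccod C (ext c))"
      "vY c \<in> hom C (Y b) (Y c)" "zY c \<in> hom C (ccod C (ext c)) (Y c)"
      "p b \<in> hom C (X b) (Y b)" "p c \<in> hom C (X c) (Y c)" "lam c \<in> hom C (X c) L"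
      "lW b \<in> hom C L (W b)" "qW b \<in> hom C (Y b) (W b)" "lW c \<in> hom C L (W c)"
      "qW c \<in> hom C (Y c) (W c)" "TW b c \<in> hom C (W b) (W c)"
      using cell cell_po T_arr[OF bc] F p_arr[OF b] lam_arr[OF c] W_arrs[OF b] W_arrs[OF c] TW[OF bc]
        pushoutD[OF F(1)] Y_succ(1)[OF imm]
      unfolding hom_iff by simp_all
  qed
  then show ?thesis unfolding base_changes_def using cell(3) by blast
qed

lemma TW_continuous:
  assumes lim: "limit_point r c"
  shows "chain_colimit C r (underS r c) W TW (W c) (\<lambda>b. TW b c)"
proof -
  let ?S = "underS r c"
  have c: "c \<in> Field r" using lim limit_point_iff by blast
  obtain s where s: "s \<in> ?S" using lim unfolding limit_point_def underS_def by blast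
  have S: "b \<in> ?S \<Longrightarrow> (b, c) \<in> r \<and> b \<in> Field r" for b
    using FieldI1[of b c r] unfolding underS_def by blast
  have total: "\<forall>b\<in>?S. \<forall>b'\<in>?S. (b, b') \<in> r \<or> (b', b) \<in> r" using S r_total by blast
  have TX: "\<forall>b\<in>?S. \<forall>b'\<in>?S. (b, b') \<in> r \<longrightarrow> T b b' \<in> hom C (X b) (X b')"
    and TY: "\<forall>b\<in>?S. \<forall>b'\<in>?S. (b, b') \<in> r \<longrightarrow> TY b b' \<in> hom C (Y b) (Y b')"
    using T_arr TY_arr by (simp_all add: hom_iff)
  have p: "\<forall>b\<in>?S. p b \<in> hom C (X b) (Y b)" using S p_arr by (simp add: hom_iff)
  have pL: "p c \<in> hom C (X c) (Y c)" "\<forall>b\<in>?S. cmp C (p c) (T b c) = cmp C (TY b c) (p b)"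
    using p_arr[OF c] S p_natural by (simp_all add: hom_iff)
  have a: "lam c \<in> hom C (X c) L" using lam_arr[OF c] by (simp add: hom_iff)
  have W_po': "\<forall>b\<in>?S. is_pushout C (p b) (cmp C (lam c) (T b c)) (lW b) (qW b)"
    using S W_po lam_T by simp
  have W: "\<forall>b\<in>?S. W b = ccod C (lW b)" unfolding W_def by simp
  have TW': "\<forall>b\<in>?S. \<forall>b'\<in>?S. (b, b') \<in> r \<longrightarrow> TW b b' \<in> hom C (W b) (W b') \<and>
      cmp C (TW b b') (lW b) = lW b' \<and> cmp C (TW b b') (qW b) = cmp C (qW b') (TY b b')"
    using TW by (simp add: hom_iff)
  have om: "\<forall>b\<in>?S. TW b c \<in> hom C (W b) (ccod C (lW c)) \<and>
      cmp C (TW b c) (lW b) = lW c \<and> cmp C (TW b c) (qW b) = cmp C (qW c) (TY b c)"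
    using S TW by (simp add: hom_iff W_def)
  show ?thesis
    using chain_colimit_pushout[OF s total TX TY p X_continuous[OF lim] Y_continuous[OF lim] pL a
        W_po' W TW' W_po[OF c] om]
    unfolding W_def .
qed

lemma W_seq: "tseq C (base_changes C I) r W TW"
  unfolding tseq_def
proof (intro conjI allI impI ballI)
  fix b c assume "(b, c) \<in> r"
  then show "TW b c \<in> hom C (W b) (W c)" using TW by (simp add: hom_iff)
next
  fix b c d assume "(b, c) \<in> r \<and> (c, d) \<in> r"
  then show "cmp C (TW c d) (TW b c) = TW b d" using TW_comp by blast
next
  fix b assume "b \<in> Field r"
  then show "W b \<in> obj C" using W_arrs(1,3) cod_obj by metis
qed (simp_all add: TW_id TW_succ TW_continuous)

definition om :: "'i \<Rightarrow> 'm" where "om b = copair C (lW b) (qW b) h (lamY b)"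

lemma om:
  assumes b: "b \<in> Field r"
  shows "om b \<in> arr C" "cdom C (om b) = W b" "ccod C (om b) = LY" "cmp C (om b) (lW b) = h"
    "cmp C (om b) (qW b) = lamY b"
proof -
  note lamY = chain_colimitD(2-4)[OF Y_colim b]
  have "h \<in> arr C" "lamY b \<in> arr C" "cdom C h = ccod C (lam b)" "cdom C (lamY b) = ccod C (p b)"
    "ccod C h = ccod C (lamY b)" "cmp C h (lam b) = cmp C (lamY b) (p b)"
    using h lamY lam_arr[OF b] p_arr[OF b] b by simp_all
  note om = copair[OF W_po[OF b] this, folded om_def]
  show "om b \<in> arr C" "cdom C (om b) = W b" "ccod C (om b) = LY" "cmp C (om b) (lW b) = h"
    "cmp C (om b) (qW b) = lamY b"
    using om W_arrs[OF b] h by simp_all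
qed

lemma W_colim: "chain_colimit C r (Field r) W TW LY om"
proof -
  have total: "\<forall>b\<in>Field r. \<forall>c\<in>Field r. (b, c) \<in> r \<or> (c, b) \<in> r" using r_total by blast
  have TX: "\<forall>b\<in>Field r. \<forall>c\<in>Field r. (b, c) \<in> r \<longrightarrow> T b c \<in> hom C (X b) (X c)"
    and TY: "\<forall>b\<in>Field r. \<forall>c\<in>Field r. (b, c) \<in> r \<longrightarrow> TY b c \<in> hom C (Y b) (Y c)"
    using T_arr TY_arr by (simp_all add: hom_iff)
  have p: "\<forall>b\<in>Field r. p b \<in> hom C (X b) (Y b)" using p_arr by (simp add: hom_iff)
  have pL: "h \<in> hom C L LY" "\<forall>b\<in>Field r. cmp C h (lam b) = cmp C (lamY b) (p b)"
    using h by (simp_all add: hom_iff)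
  have a: "idt C L \<in> hom C L L" using L_obj by (simp add: hom_iff)
  have W_po': "\<forall>b\<in>Field r. is_pushout C (p b) (cmp C (idt C L) (lam b)) (lW b) (qW b)"
    using W_po lam_arr by simp
  have W: "\<forall>b\<in>Field r. W b = ccod C (lW b)" unfolding W_def by simp
  have TW': "\<forall>b\<in>Field r. \<forall>c\<in>Field r. (b, c) \<in> r \<longrightarrow> TW b c \<in> hom C (W b) (W c) \<and>
      cmp C (TW b c) (lW b) = lW c \<and> cmp C (TW b c) (qW b) = cmp C (qW c) (TY b c)"
    using TW by (simp add: hom_iff)
  have P_po: "is_pushout C h (idt C L) h (idt C LY)" using pushout_along_id(1)[OF h(1)] h by simp
  have om': "\<forall>b\<in>Field r. om b \<in> hom C (W b) (ccod C h) \<and>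
      cmp C (om b) (lW b) = h \<and> cmp C (om b) (qW b) = cmp C (idt C LY) (lamY b)"
    using om h chain_colimitD(2-4)[OF Y_colim] by (simp add: hom_iff)
  show ?thesis
    using chain_colimit_pushout[OF b0 total TX TY p X_colim Y_colim pL a W_po' W TW' P_po om'] h(3)
    by simp
qed

lemma h_cof_reg: "h \<in> cof_reg TYPE('i) C I"
proof -
  have "h = om b0" using om(1,2,4)[OF b0] W_b0 by simp
  then show ?thesis unfolding cof_reg_def tcomp_def mem_Collect_eq
    using well_order b0 b0_least W_seq W_colim by blast
qed

lemma lam_b0_Phi_cof_reg: "lam b0 \<in> Phi C (cof_reg TYPE('i) C I)"
  unfolding Phi_def using lam_arr[OF b0] h h_cof_reg h_lam_b0_cof_reg by blast

end

theorem lemma4p3: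
  fixes C :: "('o, 'm) cat" and I :: "'m set"
  assumes "category C"
    and "cocomplete TYPE('x) C"
    and "infinite (UNIV :: 'x set)"
    and "\<exists>e :: 'i \<Rightarrow> 'x. inj e"
    and "I \<subseteq> arr C"
  shows "cof_reg TYPE('i) C (Phi C I) \<subseteq> Phi C (cof_reg TYPE('i) C I)"
proof
  fix f assume "f \<in> cof_reg TYPE('i) C (Phi C I)"
  then obtain r :: "'i rel" and X T L lam b0 where seq:
    "Well_order r" "b0 \<in> Field r" "\<forall>b\<in>Field r. (b0, b) \<in> r"
    "tseq C (base_changes C (Phi C I)) r X T" "chain_colimit C r (Field r) X T L lam"
    and f: "f = lam b0"
    unfolding cof_reg_def tcomp_def by blast
  interpret Phi_cof_sequence C "TYPE('x)" I r X T L lam b0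
    by unfold_locales (use assms(1-4) seq in \<open>simp_all add: cat_setting_def\<close>)
  show "f \<in> Phi C (cof_reg TYPE('i) C I)" using lam_b0_Phi_cof_reg f by simp
qed

end
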